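(* The ideal $\mathfrak{a}_n=\mathfrak{p}_1+\cdots+\mathfrak{p}_n$ is the only nonzero prime ideal $\mathfrak{p}$ of $\mathbb{S}_n$ such that $\sigma(\mathfrak{p})=\mathfrak{p}$ for all $\sigma\in G_n$.
   Context: $K$ is a field of characteristic zero. $\mathbb{S}_n$ is the $K$-algebra generated by $x_1,\dots,x_n,y_1,\dots,y_n$ with defining relations $y_ix_i=1$ and $[x_i,y_j]=[x_i,x_j]=[y_i,y_j]=0$ for $i\ne j$; $G_n=\mathrm{Aut}_{K\text{-alg}}(\mathbb{S}_n)$. For $k,l\in\mathbb{N}$, $E_{kl}(i):=x_i^ky_i^l-x_i^{k+1}y_i^{l+1}$, $F(i):=\bigoplus_{k,l}KE_{kl}(i)$, and $\mathfrak{p}_i:=F(i)\otimes\bigotimes_{j\ne i}\mathbb{S}_1(j)\subset\mathbb{S}_n=\bigotimes_j\mathbb{S}_1(j)$ (the ideal generated by $1-x_iy_i$). *)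

theory Defs
  imports Main
begin

text \<open>By the defining relations, the
words x^alpha y^beta (alpha, beta multi-indices supported in {0..<n}) form a K-basis,
and S_n is the semigroup algebra of the n-th power of the bicyclic monoid
(x^a y^b)(x^c y^d) = x^(a+c-min b c) y^(b+d-min b c), coordinatewise.
Variables are indexed 0..n-1. Elements are finitely supported coefficient functions.\<close>

type_synonym mono = "(nat \<Rightarrow> nat) \<times> (nat \<Rightarrow> nat)"

definition bmul :: "mono \<Rightarrow> mono \<Rightarrow> mono" where
  "bmul p q = ((\<lambda>i. fst p i + fst q i - min (snd p i) (fst q i)),
               (\<lambda>i. snd p i + snd q i - min (snd p i) (fst q i)))"

definition valid_monos :: "nat \<Rightarrow> mono set" where
  "valid_monos n = {(a, b). \<forall>i\<ge>n. a i = 0 \<and> b i = 0}"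

definition Sn :: "nat \<Rightarrow> (mono \<Rightarrow> 'k::field) set" where
  "Sn n = {f. finite {m. f m \<noteq> 0} \<and> (\<forall>m. f m \<noteq> 0 \<longrightarrow> m \<in> valid_monos n)}"

definition sadd :: "(mono \<Rightarrow> 'k::field) \<Rightarrow> (mono \<Rightarrow> 'k) \<Rightarrow> (mono \<Rightarrow> 'k)" where
  "sadd f g = (\<lambda>m. f m + g m)"

definition sneg :: "(mono \<Rightarrow> 'k::field) \<Rightarrow> (mono \<Rightarrow> 'k)" where
  "sneg f = (\<lambda>m. - f m)"

definition szero :: "mono \<Rightarrow> 'k::field" where
  "szero = (\<lambda>m. 0)"

definition sone :: "mono \<Rightarrow> 'k::field" where
  "sone = (\<lambda>m. if m = ((\<lambda>i. 0), (\<lambda>i. 0)) then 1 else 0)"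

definition sscale :: "'k::field \<Rightarrow> (mono \<Rightarrow> 'k) \<Rightarrow> (mono \<Rightarrow> 'k)" where
  "sscale c f = (\<lambda>m. c * f m)"

definition smult :: "(mono \<Rightarrow> 'k::field) \<Rightarrow> (mono \<Rightarrow> 'k) \<Rightarrow> (mono \<Rightarrow> 'k)" where
  "smult f g = (\<lambda>m. \<Sum>(p, q) \<in> {(p, q). f p \<noteq> 0 \<and> g q \<noteq> 0 \<and> bmul p q = m}. f p * g q)"

definition genx :: "nat \<Rightarrow> (mono \<Rightarrow> 'k::field)" where
  "genx i = (\<lambda>m. if m = ((\<lambda>j. if j = i then 1 else 0), (\<lambda>j. 0)) then 1 else 0)"

definition geny :: "nat \<Rightarrow> (mono \<Rightarrow> 'k::field)" where
  "geny i = (\<lambda>m. if m = ((\<lambda>j. 0), (\<lambda>j. if j = i then 1 else 0)) then 1 else 0)"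

definition is_ideal :: "nat \<Rightarrow> (mono \<Rightarrow> 'k::field) set \<Rightarrow> bool" where
  "is_ideal n I \<longleftrightarrow> I \<subseteq> Sn n \<and> szero \<in> I \<and>
     (\<forall>a\<in>I. \<forall>b\<in>I. sadd a b \<in> I) \<and> (\<forall>a\<in>I. sneg a \<in> I) \<and>
     (\<forall>r\<in>Sn n. \<forall>a\<in>I. smult r a \<in> I \<and> smult a r \<in> I)"

definition is_prime_ideal :: "nat \<Rightarrow> (mono \<Rightarrow> 'k::field) set \<Rightarrow> bool" where
  "is_prime_ideal n P \<longleftrightarrow> is_ideal n P \<and> P \<noteq> Sn n \<and>
     (\<forall>I J. is_ideal n I \<and> is_ideal n J \<and> (\<forall>a\<in>I. \<forall>b\<in>J. smult a b \<in> P)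
        \<longrightarrow> I \<subseteq> P \<or> J \<subseteq> P)"

definition ideal_gen :: "nat \<Rightarrow> (mono \<Rightarrow> 'k::field) set \<Rightarrow> (mono \<Rightarrow> 'k) set" where
  "ideal_gen n A = \<Inter> {I. is_ideal n I \<and> A \<subseteq> I}"

definition pideal :: "nat \<Rightarrow> nat \<Rightarrow> (mono \<Rightarrow> 'k::field) set" where
  "pideal n i = ideal_gen n {sadd sone (sneg (smult (genx i) (geny i)))}"

definition aideal :: "nat \<Rightarrow> (mono \<Rightarrow> 'k::field) set" where
  "aideal n = {foldr sadd (map f [0..<n]) szero | f. \<forall>i<n. f i \<in> pideal n i}"

definition Gn :: "nat \<Rightarrow> ((mono \<Rightarrow> 'k::field) \<Rightarrow> (mono \<Rightarrow> 'k)) set" where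
  "Gn n = {\<sigma>. bij_betw \<sigma> (Sn n) (Sn n) \<and>
     (\<forall>f\<in>Sn n. \<forall>g\<in>Sn n. \<sigma> (sadd f g) = sadd (\<sigma> f) (\<sigma> g) \<and>
                         \<sigma> (smult f g) = smult (\<sigma> f) (\<sigma> g)) \<and>
     \<sigma> sone = sone \<and> (\<forall>c. \<forall>f\<in>Sn n. \<sigma> (sscale c f) = sscale c (\<sigma> f))}"

end

theory Submission
  imports Defs "HOL-Library.Poly_Mapping"
begin

text \<open>
  The map \<open>x\<^sub>i \<mapsto> t\<^sub>i, y\<^sub>i \<mapsto> t\<^sub>i\<^sup>-\<^sup>1\<close> into the Laurent polynomial ring is a ring
  homomorphism whose kernel is \<open>a\<^sub>n\<close>: modulo \<open>a\<^sub>n\<close> every monomial \<open>x\<^sup>\<alpha> y\<^sup>\<beta>\<close> can be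
  reduced to one with \<open>min \<alpha>\<^sub>i \<beta>\<^sub>i = 0\<close>, and such monomials have distinct images. Hence
  \<open>a\<^sub>n\<close> is prime, and it is stable under automorphisms because it is generated by the
  commutators \<open>[y\<^sub>i, x\<^sub>i] = 1 - x\<^sub>i y\<^sub>i\<close> and contains all commutators.

  Conversely let \<open>P\<close> be a nonzero \<open>G\<^sub>n\<close>-stable prime. The idempotent \<open>e\<^sub>i = 1 - x\<^sub>i y\<^sub>i\<close>
  satisfies \<open>e\<^sub>i s e\<^sub>i = e\<^sub>i s'\<close>, where \<open>s'\<close> is the part of \<open>s\<close> free of \<open>x\<^sub>i, y\<^sub>i\<close>. This
  lets one remove the variables from a nonzero element of \<open>P\<close> one at a time, unless some
  \<open>e\<^sub>i\<close> lies in \<open>P\<close>; as \<open>P \<noteq> S\<^sub>n\<close>, some \<open>e\<^sub>i\<close> does, and permuting the variables gives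
  \<open>a\<^sub>n \<subseteq> P\<close>. If \<open>P \<supset> a\<^sub>n\<close> strictly, an element of \<open>P\<close> whose Laurent image has the fewest
  terms can be shortened by a torus automorphism \<open>x\<^sub>i \<mapsto> 2 x\<^sub>i, y\<^sub>i \<mapsto> y\<^sub>i / 2\<close> (this is
  where characteristic zero is used), so its image is a single term and \<open>P\<close> contains a unit.
\<close>

section \<open>Arithmetic in \<open>S\<^sub>n\<close>\<close>

definition supp :: "(mono \<Rightarrow> 'k::field) \<Rightarrow> mono set" where
  "supp f = {m. f m \<noteq> 0}"

definition monom :: "mono \<Rightarrow> mono \<Rightarrow> 'k::field" where
  "monom p = (\<lambda>m. if m = p then 1 else 0)"

definition mono1 :: mono where "mono1 = ((\<lambda>i. 0), (\<lambda>i. 0))"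

lemma sone_eq_monom: "sone = monom mono1" by (simp add: sone_def monom_def mono1_def)

lemma smult_expand:
  fixes f g :: "mono \<Rightarrow> 'k::field"
  assumes A: "finite A" "supp f \<subseteq> A" and B: "finite B" "supp g \<subseteq> B"
  shows "smult f g m = (\<Sum>p\<in>A. \<Sum>q\<in>B. if bmul p q = m then f p * g q else 0)"
proof -
  have S: "{(p, q). f p \<noteq> 0 \<and> g q \<noteq> 0 \<and> bmul p q = m} \<subseteq> A \<times> B"
    using A B by (auto simp: supp_def)
  have "smult f g m = (\<Sum>(p,q)\<in>{(p, q). f p \<noteq> 0 \<and> g q \<noteq> 0 \<and> bmul p q = m}. f p * g q)"
    by (simp add: smult_def)
  also have "\<dots> = (\<Sum>(p,q)\<in>A \<times> B. if bmul p q = m then f p * g q else 0)"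
    by (rule sum.mono_neutral_cong_left) (use S A B in \<open>auto split: if_splits\<close>)
  also have "\<dots> = (\<Sum>p\<in>A. \<Sum>q\<in>B. if bmul p q = m then f p * g q else 0)"
    by (simp add: sum.cartesian_product)
  finally show ?thesis .
qed

lemma bmul_assoc: "bmul (bmul p q) r = bmul p (bmul q r)"
  by (auto simp: bmul_def fun_eq_iff min_def)

lemma bmul_mono1 [simp]: "bmul mono1 p = p" "bmul p mono1 = p"
  by (auto simp: bmul_def mono1_def)

lemma bmul_valid: "p \<in> valid_monos n \<Longrightarrow> q \<in> valid_monos n \<Longrightarrow> bmul p q \<in> valid_monos n"
  by (auto simp: valid_monos_def bmul_def)

lemma mono1_valid [simp]: "mono1 \<in> valid_monos n" by (simp add: mono1_def valid_monos_def)

lemma Sn_iff: "f \<in> Sn n \<longleftrightarrow> finite (supp f) \<and> supp f \<subseteq> valid_monos n"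
  by (auto simp: Sn_def supp_def)

lemma supp_sadd: "supp (sadd f g) \<subseteq> supp f \<union> supp g"
  by (auto simp: supp_def sadd_def)
lemma supp_sneg [simp]: "supp (sneg f) = supp f"
  by (auto simp: supp_def sneg_def)
lemma supp_szero [simp]: "supp szero = {}"
  by (auto simp: supp_def szero_def)
lemma supp_sscale: "supp (sscale c f) \<subseteq> supp f"
  by (auto simp: supp_def sscale_def)
lemma supp_monom [simp]: "supp (monom p) = {p}"
  by (auto simp: supp_def monom_def)

lemma supp_smult:
  assumes "finite (supp f)" "finite (supp g)"
  shows "supp (smult f g) \<subseteq> (\<lambda>(p,q). bmul p q) ` (supp f \<times> supp g)"
proof
  fix m assume "m \<in> supp (smult f g)"
  hence "smult f g m \<noteq> 0" by (simp add: supp_def)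
  hence "{(p, q). f p \<noteq> 0 \<and> g q \<noteq> 0 \<and> bmul p q = m} \<noteq> {}"
    unfolding smult_def by (metis (no_types, lifting) sum.empty)
  then obtain p q where "f p \<noteq> 0" "g q \<noteq> 0" "bmul p q = m" by auto
  hence "(p,q) \<in> supp f \<times> supp g" "m = (\<lambda>(p,q). bmul p q) (p,q)" by (auto simp: supp_def)
  thus "m \<in> (\<lambda>(p,q). bmul p q) ` (supp f \<times> supp g)"
    by force
qed

lemma finite_supp_smult:
  "finite (supp f) \<Longrightarrow> finite (supp g) \<Longrightarrow> finite (supp (smult f g))"
  by (rule finite_subset[OF supp_smult]) auto

lemma Sn_sadd: "f \<in> Sn n \<Longrightarrow> g \<in> Sn n \<Longrightarrow> sadd f g \<in> Sn n"
  using supp_sadd[of f g] by (auto simp: Sn_iff intro: finite_subset)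
lemma Sn_sneg: "f \<in> Sn n \<Longrightarrow> sneg f \<in> Sn n"
  by (auto simp: Sn_iff)
lemma Sn_sscale: "f \<in> Sn n \<Longrightarrow> sscale c f \<in> Sn n"
  using supp_sscale[of c f] by (auto simp: Sn_iff intro: finite_subset)
lemma Sn_monom: "p \<in> valid_monos n \<Longrightarrow> monom p \<in> Sn n"
  by (auto simp: Sn_iff)
lemma Sn_szero: "szero \<in> Sn n"
  by (auto simp: Sn_iff)
lemma Sn_sone: "sone \<in> Sn n"
  by (auto simp: Sn_iff sone_eq_monom)
lemma Sn_smult: assumes "f \<in> Sn n" "g \<in> Sn n" shows "smult f g \<in> Sn n"
proof -
  have "supp (smult f g) \<subseteq> valid_monos n"
  proof
    fix m assume "m \<in> supp (smult f g)"
    then obtain pq where "pq \<in> supp f \<times> supp g" "m = (\<lambda>(p,q). bmul p q) pq"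
      using supp_smult[of f g] assms by (auto simp: Sn_iff)
    thus "m \<in> valid_monos n" using assms bmul_valid[of "fst pq" n "snd pq"]
      by (auto simp: Sn_iff split: prod.splits)
  qed
  thus ?thesis using assms by (simp add: Sn_iff finite_supp_smult)
qed

lemma smult_add_left:
  assumes "finite (supp f)" "finite (supp g)" "finite (supp h)"
  shows "smult (sadd f g) h = sadd (smult f h) (smult g h)"
proof
  fix m
  let ?A = "supp f \<union> supp g"
  have fA: "finite ?A" using assms by auto
  have e1: "smult (sadd f g) h m = (\<Sum>p\<in>?A. \<Sum>q\<in>supp h. if bmul p q = m then sadd f g p * h q else 0)"
    by (rule smult_expand) (use fA assms supp_sadd in auto)
  have e2: "smult f h m = (\<Sum>p\<in>?A. \<Sum>q\<in>supp h. if bmul p q = m then f p * h q else 0)"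
    by (rule smult_expand) (use fA assms in auto)
  have e3: "smult g h m = (\<Sum>p\<in>?A. \<Sum>q\<in>supp h. if bmul p q = m then g p * h q else 0)"
    by (rule smult_expand) (use fA assms in auto)
  show "smult (sadd f g) h m = sadd (smult f h) (smult g h) m"
    apply (simp only: e1 e2 e3 sadd_def[of "smult f h" "smult g h"])
    by (simp add: sadd_def sum.distrib[symmetric] distrib_right if_distrib cong: if_cong)
qed

lemma smult_add_right:
  assumes "finite (supp f)" "finite (supp g)" "finite (supp h)"
  shows "smult h (sadd f g) = sadd (smult h f) (smult h g)"
proof
  fix m
  let ?A = "supp f \<union> supp g"
  have fA: "finite ?A" using assms by auto
  have e1: "smult h (sadd f g) m = (\<Sum>q\<in>supp h. \<Sum>p\<in>?A. if bmul q p = m then h q * sadd f g p else 0)"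
    by (rule smult_expand) (use fA assms supp_sadd in auto)
  have e2: "smult h f m = (\<Sum>q\<in>supp h. \<Sum>p\<in>?A. if bmul q p = m then h q * f p else 0)"
    by (rule smult_expand) (use fA assms in auto)
  have e3: "smult h g m = (\<Sum>q\<in>supp h. \<Sum>p\<in>?A. if bmul q p = m then h q * g p else 0)"
    by (rule smult_expand) (use fA assms in auto)
  show "smult h (sadd f g) m = sadd (smult h f) (smult h g) m"
    apply (simp only: e1 e2 e3 sadd_def[of "smult h f" "smult h g"])
    by (simp add: sadd_def sum.distrib[symmetric] distrib_left if_distrib cong: if_cong)
qed

lemma smult_scale_left:
  assumes "finite (supp f)" "finite (supp h)"
  shows "smult (sscale c f) h = sscale c (smult f h)"
proof
  fix m
  have e1: "smult (sscale c f) h m = (\<Sum>p\<in>supp f. \<Sum>q\<in>supp h. if bmul p q = m then sscale c f p * h q else 0)"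
    by (rule smult_expand) (use assms supp_sscale in auto)
  have e2: "smult f h m = (\<Sum>p\<in>supp f. \<Sum>q\<in>supp h. if bmul p q = m then f p * h q else 0)"
    by (rule smult_expand) (use assms in auto)
  show "smult (sscale c f) h m = sscale c (smult f h) m"
    apply (simp only: e1 e2 sscale_def[of c "smult f h"])
    by (simp add: sscale_def sum_distrib_left mult.assoc if_distrib cong: if_cong)
qed

lemma smult_scale_right:
  assumes "finite (supp f)" "finite (supp h)"
  shows "smult h (sscale c f) = sscale c (smult h f)"
proof
  fix m
  have e1: "smult h (sscale c f) m = (\<Sum>q\<in>supp h. \<Sum>p\<in>supp f. if bmul q p = m then h q * sscale c f p else 0)"
    by (rule smult_expand) (use assms supp_sscale in auto)
  have e2: "smult h f m = (\<Sum>q\<in>supp h. \<Sum>p\<in>supp f. if bmul q p = m then h q * f p else 0)"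
    by (rule smult_expand) (use assms in auto)
  show "smult h (sscale c f) m = sscale c (smult h f) m"
    apply (simp only: e1 e2 sscale_def[of c "smult h f"])
    by (simp add: sscale_def sum_distrib_left mult_ac if_distrib cong: if_cong)
qed

lemma smult_monom_monom: "smult (monom p) (monom q) = (monom (bmul p q) :: mono \<Rightarrow> 'k::field)"
proof
  fix m
  have "smult (monom p) (monom q) m = (\<Sum>p'\<in>{p}. \<Sum>q'\<in>{q}.
      if bmul p' q' = m then monom p p' * (monom q q' :: 'k) else 0)"
    by (rule smult_expand) simp_all
  thus "smult (monom p) (monom q) m = (monom (bmul p q) :: mono \<Rightarrow> 'k) m"
    by (simp add: monom_def)
qed

lemma sum_delta_conj:
  "finite C \<Longrightarrow> x \<in> C \<Longrightarrow> (\<Sum>r\<in>C. if x = r \<and> P r then Y else 0) = (if P x then Y else (0::'a::comm_monoid_add))"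
proof -
  assume "finite C" "x \<in> C"
  have "(\<Sum>r\<in>C. if x = r \<and> P r then Y else 0) = (\<Sum>r\<in>C. if x = r then (if P r then Y else 0) else 0)"
    by (rule sum.cong) auto
  also have "\<dots> = (if P x then Y else 0)" using \<open>finite C\<close> \<open>x \<in> C\<close> by (simp add: sum.delta)
  finally show ?thesis .
qed

lemma sum_reorder4:
  "(\<Sum>r\<in>C. \<Sum>s\<in>H. \<Sum>p\<in>F. \<Sum>q\<in>G. X r s p q) = (\<Sum>p\<in>F. \<Sum>q\<in>G. \<Sum>s\<in>H. \<Sum>r\<in>C. (X r s p q :: 'a::comm_monoid_add))"
proof -
  have "(\<Sum>r\<in>C. \<Sum>s\<in>H. \<Sum>p\<in>F. \<Sum>q\<in>G. X r s p q) = (\<Sum>r\<in>C. \<Sum>p\<in>F. \<Sum>s\<in>H. \<Sum>q\<in>G. X r s p q)"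
    by (intro sum.cong refl, rule sum.swap)
  also have "\<dots> = (\<Sum>r\<in>C. \<Sum>p\<in>F. \<Sum>q\<in>G. \<Sum>s\<in>H. X r s p q)"
    by (intro sum.cong refl, rule sum.swap)
  also have "\<dots> = (\<Sum>p\<in>F. \<Sum>r\<in>C. \<Sum>q\<in>G. \<Sum>s\<in>H. X r s p q)"
    by (rule sum.swap)
  also have "\<dots> = (\<Sum>p\<in>F. \<Sum>q\<in>G. \<Sum>r\<in>C. \<Sum>s\<in>H. X r s p q)"
    by (intro sum.cong refl, rule sum.swap)
  also have "\<dots> = (\<Sum>p\<in>F. \<Sum>q\<in>G. \<Sum>s\<in>H. \<Sum>r\<in>C. X r s p q)"
    by (intro sum.cong refl, rule sum.swap)
  finally show ?thesis .
qed

lemma sum_reorder3: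
  "(\<Sum>t\<in>D. \<Sum>q\<in>G. \<Sum>s\<in>H. X t q s) = (\<Sum>q\<in>G. \<Sum>s\<in>H. \<Sum>t\<in>D. (X t q s :: 'a::comm_monoid_add))"
proof -
  have "(\<Sum>t\<in>D. \<Sum>q\<in>G. \<Sum>s\<in>H. X t q s) = (\<Sum>q\<in>G. \<Sum>t\<in>D. \<Sum>s\<in>H. X t q s)"
    by (rule sum.swap)
  also have "\<dots> = (\<Sum>q\<in>G. \<Sum>s\<in>H. \<Sum>t\<in>D. X t q s)"
    by (intro sum.cong refl, rule sum.swap)
  finally show ?thesis .
qed

lemma sone_mono1 [simp]: "(sone mono1 :: 'a::field) = 1" by (simp add: sone_def mono1_def)

lemma if_zero_mult: "(if c then a else 0) * (b::'a::mult_zero) = (if c then a * b else 0)"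
  "b * (if c then a else 0) = (if c then b * a else 0)" by auto

lemma smult_smult_expand_left:
  fixes f g h :: "mono \<Rightarrow> 'k::field"
  assumes fin: "finite (supp f)" "finite (supp g)" "finite (supp h)"
  shows "smult (smult f g) h m =
    (\<Sum>p\<in>supp f. \<Sum>q\<in>supp g. \<Sum>s\<in>supp h. if bmul (bmul p q) s = m then f p * g q * h s else 0)"
proof -
  define C where "C = (\<lambda>(p,q). bmul p q) ` (supp f \<times> supp g)"
  have fC: "finite C" using fin by (simp add: C_def)
  have sC: "supp (smult f g) \<subseteq> C" using supp_smult[OF fin(1,2)] by (simp add: C_def)
  have fg: "smult f g r = (\<Sum>p\<in>supp f. \<Sum>q\<in>supp g. if bmul p q = r then f p * g q else 0)" for r
    by (rule smult_expand) (use fin in auto)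
  have "smult (smult f g) h m = (\<Sum>r\<in>C. \<Sum>s\<in>supp h. if bmul r s = m then smult f g r * h s else 0)"
    by (rule smult_expand) (use fin fC sC in auto)
  also have "\<dots> = (\<Sum>r\<in>C. \<Sum>s\<in>supp h. \<Sum>p\<in>supp f. \<Sum>q\<in>supp g.
      if bmul p q = r \<and> bmul r s = m then f p * g q * h s else 0)"
    unfolding fg by (intro sum.cong refl) (simp add: sum_distrib_right if_zero_mult)
  also have "\<dots> = (\<Sum>p\<in>supp f. \<Sum>q\<in>supp g. \<Sum>s\<in>supp h. \<Sum>r\<in>C.
      if bmul p q = r \<and> bmul r s = m then f p * g q * h s else 0)"
    by (rule sum_reorder4)
  also have "\<dots> = (\<Sum>p\<in>supp f. \<Sum>q\<in>supp g. \<Sum>s\<in>supp h.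
      if bmul (bmul p q) s = m then f p * g q * h s else 0)"
    by (intro sum.cong refl, subst sum_delta_conj) (use fC in \<open>auto simp: C_def\<close>)
  finally show ?thesis .
qed

lemma smult_smult_expand_right:
  fixes f g h :: "mono \<Rightarrow> 'k::field"
  assumes fin: "finite (supp f)" "finite (supp g)" "finite (supp h)"
  shows "smult f (smult g h) m =
    (\<Sum>p\<in>supp f. \<Sum>q\<in>supp g. \<Sum>s\<in>supp h. if bmul p (bmul q s) = m then f p * g q * h s else 0)"
proof -
  define D where "D = (\<lambda>(p,q). bmul p q) ` (supp g \<times> supp h)"
  have fD: "finite D" using fin by (simp add: D_def)
  have sD: "supp (smult g h) \<subseteq> D" using supp_smult[OF fin(2,3)] by (simp add: D_def)
  have gh: "smult g h t = (\<Sum>q\<in>supp g. \<Sum>s\<in>supp h. if bmul q s = t then g q * h s else 0)" for t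
    by (rule smult_expand) (use fin in auto)
  have "smult f (smult g h) m = (\<Sum>p\<in>supp f. \<Sum>t\<in>D. if bmul p t = m then f p * smult g h t else 0)"
    by (rule smult_expand) (use fin fD sD in auto)
  also have "\<dots> = (\<Sum>p\<in>supp f. \<Sum>t\<in>D. \<Sum>q\<in>supp g. \<Sum>s\<in>supp h.
      if bmul q s = t \<and> bmul p t = m then f p * g q * h s else 0)"
    unfolding gh by (intro sum.cong refl) (auto simp: sum_distrib_left if_zero_mult mult_ac intro!: sum.cong)
  also have "\<dots> = (\<Sum>p\<in>supp f. \<Sum>q\<in>supp g. \<Sum>s\<in>supp h. \<Sum>t\<in>D.
      if bmul q s = t \<and> bmul p t = m then f p * g q * h s else 0)"
    by (rule sum.cong[OF refl], rule sum_reorder3)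
  also have "\<dots> = (\<Sum>p\<in>supp f. \<Sum>q\<in>supp g. \<Sum>s\<in>supp h.
      if bmul p (bmul q s) = m then f p * g q * h s else 0)"
    by (intro sum.cong refl, subst sum_delta_conj) (use fD in \<open>auto simp: D_def\<close>)
  finally show ?thesis .
qed

lemma smult_assoc:
  fixes f g h :: "mono \<Rightarrow> 'k::field"
  assumes "finite (supp f)" "finite (supp g)" "finite (supp h)"
  shows "smult (smult f g) h = smult f (smult g h)"
  using assms by (simp add: fun_eq_iff smult_smult_expand_left smult_smult_expand_right bmul_assoc)

lemma smult_sone_left: "finite (supp f) \<Longrightarrow> smult sone f = f"
proof
  fix m assume fin: "finite (supp f)"
  have "smult sone f m = (\<Sum>p\<in>{mono1}. \<Sum>q\<in>supp f. if bmul p q = m then sone p * f q else 0)"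
    by (rule smult_expand) (use fin in \<open>auto simp: sone_eq_monom\<close>)
  also have "\<dots> = (\<Sum>q\<in>supp f. if q = m then f q else 0)"
    by (simp only: sum.insert_remove finite.emptyI sum.empty bmul_mono1 sone_mono1 mult_1_left
        mult_1_right Diff_empty empty_iff add_0_right if_False empty_Diff)
  also have "\<dots> = f m" using fin by (simp add: sum.delta' supp_def)
  finally show "smult sone f m = f m" .
qed

lemma smult_sone_right: "finite (supp f) \<Longrightarrow> smult f sone = f"
proof
  fix m assume fin: "finite (supp f)"
  have "smult f sone m = (\<Sum>q\<in>supp f. \<Sum>p\<in>{mono1}. if bmul q p = m then f q * sone p else 0)"
    by (rule smult_expand) (use fin in \<open>auto simp: sone_eq_monom\<close>)
  also have "\<dots> = (\<Sum>q\<in>supp f. if q = m then f q else 0)"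
    by (simp only: sum.insert_remove finite.emptyI sum.empty bmul_mono1 sone_mono1 mult_1_left
        mult_1_right Diff_empty empty_iff add_0_right if_False empty_Diff)
  also have "\<dots> = f m" using fin by (simp add: sum.delta' supp_def)
  finally show "smult f sone m = f m" .
qed

lemma supp_sone [simp]: "supp sone = {mono1}" by (simp add: sone_eq_monom)

lemma sscale_sone_mult: "finite (supp a) \<Longrightarrow> sscale c a = smult (sscale c sone) a"
  by (simp add: smult_scale_left smult_sone_left)

lemma smult_zero_left: "smult szero f = szero"
  by (simp add: smult_def szero_def fun_eq_iff)
lemma smult_zero_right: "smult f szero = szero"
  by (simp add: smult_def szero_def fun_eq_iff)

lemma finite_support_induct:
  assumes "finite (supp f)" "supp f \<subseteq> V"
    and "Q szero"
    and "\<And>m c g. m \<in> V \<Longrightarrow> finite (supp g) \<Longrightarrow> supp g \<subseteq> V \<Longrightarrow> m \<notin> supp g \<Longrightarrow> Q g \<Longrightarrow> Q (sadd (sscale c (monom m)) g)"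
  shows "Q f"
  using assms(1,2)
proof (induction "card (supp f)" arbitrary: f)
  case 0
  hence "f = szero" by (auto simp: supp_def szero_def fun_eq_iff)
  thus ?case using assms(3) by simp
next
  case (Suc k)
  then obtain m where m: "m \<in> supp f" by (metis card.empty empty_iff nat.distinct(1) subsetI subset_antisym)
  define g where "g = (\<lambda>x. if x = m then 0 else f x)"
  have sg: "supp g = supp f - {m}" by (auto simp: g_def supp_def)
  have "f = sadd (sscale (f m) (monom m)) g"
    by (auto simp: g_def sadd_def sscale_def monom_def fun_eq_iff)
  moreover have "Q g"
    using Suc sg m by (intro Suc.hyps) (auto simp: card_Diff_singleton)
  ultimately show ?case using assms(4)[of m g "f m"] Suc sg m by auto
qed

lemma Sn_finite_supp: "f \<in> Sn n \<Longrightarrow> finite (supp f)" by (simp add: Sn_iff)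

lemma sneg_eq_sscale: "sneg f = sscale (-1) f" by (simp add: sneg_def sscale_def fun_eq_iff)

lemma smult_neg_left: "finite (supp f) \<Longrightarrow> finite (supp h) \<Longrightarrow> smult (sneg f) h = sneg (smult f h)"
  by (simp add: sneg_eq_sscale smult_scale_left)
lemma smult_neg_right: "finite (supp f) \<Longrightarrow> finite (supp h) \<Longrightarrow> smult h (sneg f) = sneg (smult h f)"
  by (simp add: sneg_eq_sscale smult_scale_right)

section \<open>Ideals\<close>

lemma is_ideal_Sn: "is_ideal n (Sn n)"
  by (auto simp: is_ideal_def Sn_szero Sn_sadd Sn_sneg Sn_smult)

lemma ideal_subset_Sn: "is_ideal n I \<Longrightarrow> I \<subseteq> Sn n" by (simp add: is_ideal_def)

lemma ideal_add: "is_ideal n I \<Longrightarrow> a \<in> I \<Longrightarrow> b \<in> I \<Longrightarrow> sadd a b \<in> I"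
  by (simp add: is_ideal_def)
lemma ideal_neg: "is_ideal n I \<Longrightarrow> a \<in> I \<Longrightarrow> sneg a \<in> I"
  by (simp add: is_ideal_def)
lemma ideal_zero: "is_ideal n I \<Longrightarrow> szero \<in> I"
  by (simp add: is_ideal_def)
lemma ideal_multl: "is_ideal n I \<Longrightarrow> r \<in> Sn n \<Longrightarrow> a \<in> I \<Longrightarrow> smult r a \<in> I"
  by (simp add: is_ideal_def)
lemma ideal_multr: "is_ideal n I \<Longrightarrow> r \<in> Sn n \<Longrightarrow> a \<in> I \<Longrightarrow> smult a r \<in> I"
  by (simp add: is_ideal_def)

lemma is_ideal_Inter:
  assumes "F \<noteq> {}" "\<And>I. I \<in> F \<Longrightarrow> is_ideal n I"
  shows "is_ideal n (\<Inter>F)"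
proof -
  from assms(1) obtain I0 where "I0 \<in> F" by auto
  hence "\<Inter>F \<subseteq> Sn n" using assms(2)[of I0] by (auto simp: is_ideal_def)
  show ?thesis unfolding is_ideal_def
  proof (intro conjI ballI)
    show "\<Inter>F \<subseteq> Sn n" by fact
    show "szero \<in> \<Inter>F" using assms(2) ideal_zero by blast
    show "sadd x y \<in> \<Inter>F" if "x \<in> \<Inter>F" "y \<in> \<Inter>F" for x y
      using that assms(2) ideal_add by blast
    show "sneg x \<in> \<Inter>F" if "x \<in> \<Inter>F" for x
      using that assms(2) ideal_neg by blast
    show "smult r x \<in> \<Inter>F" if "r \<in> Sn n" "x \<in> \<Inter>F" for r x
      using that assms(2) ideal_multl by blast
    show "smult x r \<in> \<Inter>F" if "r \<in> Sn n" "x \<in> \<Inter>F" for r x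
      using that assms(2) ideal_multr by blast
  qed
qed

lemma is_ideal_ideal_gen:
  assumes "A \<subseteq> Sn n" shows "is_ideal n (ideal_gen n A)"
  unfolding ideal_gen_def
  by (rule is_ideal_Inter) (use assms is_ideal_Sn in auto)

lemma ideal_gen_superset: "A \<subseteq> Sn n \<Longrightarrow> A \<subseteq> ideal_gen n A"
  by (auto simp: ideal_gen_def)

lemma ideal_gen_least: "is_ideal n I \<Longrightarrow> A \<subseteq> I \<Longrightarrow> ideal_gen n A \<subseteq> I"
  by (auto simp: ideal_gen_def)

lemma ideal_sscale: assumes "is_ideal n I" "a \<in> I" shows "sscale c a \<in> I"
proof -
  have "a \<in> Sn n" using assms ideal_subset_Sn by blast
  hence "sscale c a = smult (sscale c sone) a" by (intro sscale_sone_mult) (simp add: Sn_iff)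
  moreover have "smult (sscale c sone) a \<in> I"
    by (rule ideal_multl[OF assms(1) Sn_sscale[OF Sn_sone] assms(2)])
  ultimately show ?thesis by simp
qed

lemma ideal_sone_eq_Sn: fixes I :: "(mono \<Rightarrow> 'k::field) set"
  assumes "is_ideal n I" "sone \<in> I" shows "I = Sn n"
proof
  show "I \<subseteq> Sn n" using assms ideal_subset_Sn by blast
  show "Sn n \<subseteq> I"
  proof
    fix r :: "mono \<Rightarrow> 'k" assume r: "r \<in> Sn n"
    have "smult r sone \<in> I" by (rule ideal_multl[OF assms(1) r assms(2)])
    thus "r \<in> I" using r smult_sone_right[of r] by (simp add: Sn_iff)
  qed
qed

lemma is_ideal_colon:
  assumes P: "is_ideal n P" and I: "is_ideal n I"
  shows "is_ideal n {z \<in> Sn n. \<forall>w\<in>I. smult w z \<in> P}"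
  unfolding is_ideal_def
proof (intro conjI ballI)
  have IS: "\<And>w. w \<in> I \<Longrightarrow> w \<in> Sn n" using I ideal_subset_Sn by blast
  show "szero \<in> {z \<in> Sn n. \<forall>w\<in>I. smult w z \<in> P}"
    using P by (auto simp: Sn_szero smult_zero_right ideal_zero)
  show "sadd x y \<in> {z \<in> Sn n. \<forall>w\<in>I. smult w z \<in> P}"
    if "x \<in> {z \<in> Sn n. \<forall>w\<in>I. smult w z \<in> P}" "y \<in> {z \<in> Sn n. \<forall>w\<in>I. smult w z \<in> P}" for x y
    using that P IS by (auto simp: Sn_sadd smult_add_right Sn_finite_supp[of _ n] intro: ideal_add)
  show "sneg x \<in> {z \<in> Sn n. \<forall>w\<in>I. smult w z \<in> P}" if "x \<in> {z \<in> Sn n. \<forall>w\<in>I. smult w z \<in> P}" for x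
    using that P IS by (auto simp: Sn_sneg smult_neg_right Sn_finite_supp[of _ n] intro: ideal_neg)
  show "smult r x \<in> {z \<in> Sn n. \<forall>w\<in>I. smult w z \<in> P}"
    if "r \<in> Sn n" "x \<in> {z \<in> Sn n. \<forall>w\<in>I. smult w z \<in> P}" for r x
    using that P IS I by (auto simp: Sn_smult smult_assoc[symmetric] Sn_finite_supp[of _ n] ideal_multr)
  show "smult x r \<in> {z \<in> Sn n. \<forall>w\<in>I. smult w z \<in> P}"
    if "r \<in> Sn n" "x \<in> {z \<in> Sn n. \<forall>w\<in>I. smult w z \<in> P}" for r x
    using that P IS I by (auto simp: Sn_smult smult_assoc[symmetric] Sn_finite_supp[of _ n] ideal_multr)
qed (auto)

lemma is_ideal_sandwich_annihilator:
  assumes P: "is_ideal n P" and b: "b \<in> Sn n"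
  shows "is_ideal n {w \<in> Sn n. \<forall>s\<in>Sn n. smult (smult w s) b \<in> P}"
  unfolding is_ideal_def
proof (intro conjI ballI)
  let ?K = "{w \<in> Sn n. \<forall>s\<in>Sn n. smult (smult w s) b \<in> P}"
  show "szero \<in> ?K" using P by (auto simp: Sn_szero smult_zero_left ideal_zero)
  show "sadd x y \<in> ?K" if "x \<in> ?K" "y \<in> ?K" for x y
    using that P b by (auto simp: Sn_sadd smult_add_left Sn_finite_supp[of _ n] Sn_smult intro: ideal_add)
  show "sneg x \<in> ?K" if "x \<in> ?K" for x
    using that P b by (auto simp: Sn_sneg smult_neg_left Sn_finite_supp[of _ n] Sn_smult intro: ideal_neg)
  show "smult r x \<in> ?K" if "r \<in> Sn n" "x \<in> ?K" for r x
    using that P b by (auto simp: Sn_smult smult_assoc Sn_finite_supp[of _ n] ideal_multl)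
  show "smult x r \<in> ?K" if r: "r \<in> Sn n" and x: "x \<in> ?K" for r x
  proof -
    have "smult (smult (smult x r) s) b \<in> P" if s: "s \<in> Sn n" for s
      using x Sn_smult[OF r s] smult_assoc[of x r s] r s by (simp add: Sn_finite_supp[of _ n])
    thus ?thesis using r x by (simp add: Sn_smult)
  qed
qed auto

lemma prime_idealD_sandwich:
  fixes a b :: "mono \<Rightarrow> 'k::field"
  assumes P: "is_prime_ideal n P" and a: "a \<in> Sn n" and b: "b \<in> Sn n"
    and H: "\<forall>s\<in>Sn n. smult (smult a s) b \<in> P"
  shows "a \<in> P \<or> b \<in> P"
proof -
  have IP: "is_ideal n P" using P by (simp add: is_prime_ideal_def)
  define I where "I = ideal_gen n {a}"
  define J where "J = {z \<in> Sn n. \<forall>w\<in>I. smult w z \<in> P}"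
  have II: "is_ideal n I" unfolding I_def by (rule is_ideal_ideal_gen) (use a in auto)
  have aI: "a \<in> I" using ideal_gen_superset[of "{a}" n] a by (auto simp: I_def)
  have "I \<subseteq> P \<or> J \<subseteq> P"
    using P II is_ideal_colon[OF IP II] by (auto simp: is_prime_ideal_def J_def)
  moreover have "b \<in> J"
  proof -
    define K where "K = {w \<in> Sn n. \<forall>s\<in>Sn n. smult (smult w s) b \<in> P}"
    have "I \<subseteq> K" unfolding I_def K_def
      by (rule ideal_gen_least[OF is_ideal_sandwich_annihilator[OF IP b]]) (use a H in auto)
    hence "smult w b \<in> P" if "w \<in> I" for w
      using that Sn_sone smult_sone_right[of w] by (fastforce simp: K_def Sn_finite_supp)
    thus ?thesis using b by (simp add: J_def)
  qed
  ultimately show ?thesis using aI by auto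
qed

section \<open>The ideal \<open>a\<^sub>n\<close>\<close>

lemma foldr_eval: "foldr sadd (map f xs) szero = (\<lambda>m. sum_list (map (\<lambda>i. f i m) xs))"
  by (induction xs) (auto simp: sadd_def szero_def)

lemma foldr_in_ideal:
  "is_ideal n J \<Longrightarrow> (\<forall>i\<in>set xs. f i \<in> J) \<Longrightarrow> foldr sadd (map f xs) szero \<in> J"
  by (induction xs) (auto intro: ideal_add ideal_zero)

lemma foldr_Sn: "(\<forall>i\<in>set xs. f i \<in> Sn n) \<Longrightarrow> foldr sadd (map f xs) szero \<in> Sn n"
  using foldr_in_ideal[OF is_ideal_Sn] by blast

lemma foldr_add: "sadd (foldr sadd (map f xs) szero) (foldr sadd (map g xs) szero)
   = foldr sadd (map (\<lambda>i. sadd (f i) (g i)) xs) szero"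
  by (simp add: foldr_eval sadd_def fun_eq_iff sum_list_addf)

lemma foldr_neg: "sneg (foldr sadd (map f xs) szero) = foldr sadd (map (\<lambda>i. sneg (f i)) xs) szero"
proof -
  have "\<And>m. - sum_list (map (\<lambda>i. f i m) xs) = sum_list (map (\<lambda>i. - f i m) xs)"
    by (induction xs) simp_all
  thus ?thesis by (simp add: foldr_eval sneg_def)
qed

lemma foldr_multl:
  assumes "\<forall>i\<in>set xs. f i \<in> Sn n" "r \<in> Sn n"
  shows "smult r (foldr sadd (map f xs) szero) = foldr sadd (map (\<lambda>i. smult r (f i)) xs) szero"
  using assms
proof (induction xs)
  case Nil thus ?case by (simp add: smult_zero_right)
next
  case (Cons a xs)
  hence "foldr sadd (map f xs) szero \<in> Sn n" by (intro foldr_Sn) auto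
  moreover have "finite (supp (f a))" using Cons by (simp add: Sn_iff)
  ultimately show ?case using Cons by (simp add: smult_add_right Sn_finite_supp)
qed

lemma foldr_multr:
  assumes "\<forall>i\<in>set xs. f i \<in> Sn n" "r \<in> Sn n"
  shows "smult (foldr sadd (map f xs) szero) r = foldr sadd (map (\<lambda>i. smult (f i) r) xs) szero"
  using assms
proof (induction xs)
  case Nil thus ?case by (simp add: smult_zero_left)
next
  case (Cons a xs)
  hence "foldr sadd (map f xs) szero \<in> Sn n" by (intro foldr_Sn) auto
  moreover have "finite (supp (f a))" using Cons by (simp add: Sn_iff)
  ultimately show ?case using Cons by (simp add: smult_add_left Sn_finite_supp)
qed

definition e00 :: "nat \<Rightarrow> mono \<Rightarrow> 'k::field" where
  "e00 i = sadd sone (sneg (smult (genx i) (geny i)))"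

definition delta :: "nat \<Rightarrow> nat \<Rightarrow> nat" where "delta i = (\<lambda>j. if j = i then 1 else 0)"

lemma genx_eq_monom: "genx i = monom (delta i, \<lambda>j. 0)" by (simp add: genx_def monom_def delta_def)
lemma geny_eq_monom: "geny i = monom (\<lambda>j. 0, delta i)" by (simp add: geny_def monom_def delta_def)

lemma delta_valid: "i < n \<Longrightarrow> (delta i, \<lambda>j. 0) \<in> valid_monos n" "i < n \<Longrightarrow> (\<lambda>j. 0, delta i) \<in> valid_monos n"
   "i < n \<Longrightarrow> (delta i, delta i) \<in> valid_monos n"
  by (auto simp: valid_monos_def delta_def)

lemma genx_Sn: "i < n \<Longrightarrow> genx i \<in> Sn n" by (simp add: genx_eq_monom Sn_monom delta_valid)
lemma geny_Sn: "i < n \<Longrightarrow> geny i \<in> Sn n" by (simp add: geny_eq_monom Sn_monom delta_valid)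

lemma smult_genx_geny: "smult (genx i) (geny i) = monom (delta i, delta i)"
  by (simp add: genx_eq_monom geny_eq_monom smult_monom_monom bmul_def)

lemma smult_geny_genx: "smult (geny i) (genx i) = sone"
proof -
  have "bmul (\<lambda>j. 0, delta i) (delta i, \<lambda>j. 0) = mono1" by (auto simp: bmul_def delta_def mono1_def fun_eq_iff)
  thus ?thesis by (simp add: genx_eq_monom geny_eq_monom smult_monom_monom sone_eq_monom)
qed

lemma e00_eq: "e00 i = (\<lambda>m. (if m = mono1 then 1 else 0) - (if m = (delta i, delta i) then 1 else (0::'k::field)))"
  by (simp add: e00_def smult_genx_geny fun_eq_iff sadd_def sneg_def sone_eq_monom monom_def)

lemma e00_Sn: "i < n \<Longrightarrow> e00 i \<in> Sn n"
  by (simp add: e00_def Sn_sadd Sn_sneg Sn_smult genx_Sn geny_Sn Sn_sone)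

lemma is_ideal_pideal: "i < n \<Longrightarrow> is_ideal n (pideal n i)"
  unfolding pideal_def e00_def[symmetric] by (rule is_ideal_ideal_gen) (simp add: e00_Sn)

lemma e00_pideal: "i < n \<Longrightarrow> e00 i \<in> pideal n i"
  unfolding pideal_def e00_def[symmetric] using ideal_gen_superset[of "{e00 i}" n] e00_Sn by auto

lemma aideal_iff: "a \<in> aideal n \<longleftrightarrow> (\<exists>f. a = foldr sadd (map f [0..<n]) szero \<and> (\<forall>i<n. f i \<in> pideal n i))"
  by (auto simp: aideal_def)

lemma aideal_intro: "\<forall>i<n. f i \<in> pideal n i \<Longrightarrow> foldr sadd (map f [0..<n]) szero \<in> aideal n"
  unfolding aideal_def by blast

lemma pideal_family_Sn:
  assumes "\<forall>i<n. f i \<in> pideal n i" shows "\<forall>i\<in>set [0..<n]. f i \<in> Sn n"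
proof
  fix i assume "i \<in> set [0..<n]"
  hence "i < n" by simp
  thus "f i \<in> Sn n" using assms is_ideal_pideal[of i n] ideal_subset_Sn[of n "pideal n i"] by blast
qed

lemma aideal_subset_Sn: "aideal n \<subseteq> Sn n"
proof
  fix a assume "a \<in> aideal n"
  then obtain f where "a = foldr sadd (map f [0..<n]) szero" "\<forall>i<n. f i \<in> pideal n i"
    unfolding aideal_iff by blast
  thus "a \<in> Sn n" using pideal_family_Sn foldr_Sn by metis
qed

lemma aideal_closed:
  assumes F: "\<And>i a. i < n \<Longrightarrow> a \<in> pideal n i \<Longrightarrow> F a \<in> pideal n i"
    and F_sum: "\<And>f. \<forall>i<n. f i \<in> pideal n i \<Longrightarrow>
      F (foldr sadd (map f [0..<n]) szero) = foldr sadd (map (\<lambda>i. F (f i)) [0..<n]) szero"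
    and a: "a \<in> aideal n"
  shows "F a \<in> aideal n"
proof -
  obtain f where f: "a = foldr sadd (map f [0..<n]) szero" "\<forall>i<n. f i \<in> pideal n i"
    using a unfolding aideal_iff by blast
  have "\<forall>i<n. F (f i) \<in> pideal n i" using f(2) F by blast
  thus ?thesis unfolding f(1) F_sum[OF f(2)] by (rule aideal_intro)
qed

lemma is_ideal_aideal: "is_ideal n (aideal n :: (mono \<Rightarrow> 'k::field) set)"
  unfolding is_ideal_def
proof (intro conjI ballI)
  show "(aideal n :: (mono \<Rightarrow> 'k) set) \<subseteq> Sn n" by (rule aideal_subset_Sn)
  have "foldr sadd (map (\<lambda>i. szero) [0..<n]) (szero :: mono \<Rightarrow> 'k) = szero"
    unfolding foldr_eval by (simp add: szero_def)
  moreover have "\<forall>i<n. (szero :: mono \<Rightarrow> 'k) \<in> pideal n i"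
    using is_ideal_pideal ideal_zero by blast
  ultimately show "(szero :: mono \<Rightarrow> 'k) \<in> aideal n"
    using aideal_intro[of n "\<lambda>i. szero"] by metis
  show "sadd a b \<in> aideal n" if ab: "a \<in> aideal n" "b \<in> aideal n" for a b :: "mono \<Rightarrow> 'k"
  proof -
    obtain f g where "a = foldr sadd (map f [0..<n]) szero" "b = foldr sadd (map g [0..<n]) szero"
      and "\<forall>i<n. f i \<in> pideal n i" "\<forall>i<n. g i \<in> pideal n i"
      using ab unfolding aideal_iff by blast
    moreover have "\<forall>i<n. sadd (f i) (g i) \<in> pideal n i"
      using \<open>\<forall>i<n. f i \<in> pideal n i\<close> \<open>\<forall>i<n. g i \<in> pideal n i\<close> is_ideal_pideal ideal_add by blast
    ultimately show ?thesis using aideal_intro[of n "\<lambda>i. sadd (f i) (g i)"] by (simp add: foldr_add)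
  qed
  show "sneg a \<in> aideal n" if "a \<in> aideal n" for a :: "mono \<Rightarrow> 'k"
    by (rule aideal_closed[where F = sneg, OF _ _ that])
      (blast intro: ideal_neg is_ideal_pideal, simp add: foldr_neg)
  show "smult r a \<in> aideal n" if r: "r \<in> Sn n" and a: "a \<in> aideal n" for r a :: "mono \<Rightarrow> 'k"
  proof (rule aideal_closed[where F = "smult r", OF _ _ a])
    show "smult r b \<in> pideal n i" if "i < n" "b \<in> pideal n i" for i b
      using that r by (intro ideal_multl[OF is_ideal_pideal])
  qed (simp add: foldr_multl[OF pideal_family_Sn r])
  show "smult a r \<in> aideal n" if r: "r \<in> Sn n" and a: "a \<in> aideal n" for r a :: "mono \<Rightarrow> 'k"
  proof (rule aideal_closed[where F = "\<lambda>x. smult x r", OF _ _ a])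
    show "smult b r \<in> pideal n i" if "i < n" "b \<in> pideal n i" for i b
      using that r by (intro ideal_multr[OF is_ideal_pideal])
  qed (simp add: foldr_multr[OF pideal_family_Sn r])
qed

lemma pideal_subset_aideal: assumes "i < n" shows "pideal n i \<subseteq> (aideal n :: (mono \<Rightarrow> 'k::field) set)"
proof
  fix a :: "mono \<Rightarrow> 'k" assume a: "a \<in> pideal n i"
  define f where "f = (\<lambda>j. if j = i then a else szero)"
  have "foldr sadd (map f [0..<n]) szero = a"
  proof
    fix m
    have "foldr sadd (map f [0..<n]) szero m = (\<Sum>j\<in>{0..<n}. f j m)"
      unfolding foldr_eval by (simp add: sum_list_distinct_conv_sum_set)
    also have "\<dots> = (\<Sum>j\<in>{0..<n}. if j = i then a m else 0)"
      by (rule sum.cong) (auto simp: f_def szero_def)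
    also have "\<dots> = a m" using assms by (simp add: sum.delta)
    finally show "foldr sadd (map f [0..<n]) szero m = a m" .
  qed
  moreover have "\<forall>j<n. f j \<in> pideal n j"
  proof (intro allI impI)
    fix j assume "j < n"
    thus "f j \<in> pideal n j" using a is_ideal_pideal[of j n] ideal_zero[of n "pideal n j"]
      by (cases "j = i") (simp_all add: f_def)
  qed
  ultimately show "a \<in> aideal n" using aideal_intro[of n f] by simp
qed

lemma aideal_least:
  fixes J :: "(mono \<Rightarrow> 'k::field) set"
  assumes J: "is_ideal n J" "\<forall>i<n. e00 i \<in> J" shows "aideal n \<subseteq> J"
proof
  fix a :: "mono \<Rightarrow> 'k" assume a: "a \<in> aideal n"
  have P: "pideal n i \<subseteq> J" if "i < n" for i
    unfolding pideal_def e00_def[symmetric]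
    by (rule ideal_gen_least[OF J(1)]) (use J(2) that in simp)
  obtain f where f: "a = foldr sadd (map f [0..<n]) szero" "\<forall>i<n. f i \<in> pideal n i"
    using a unfolding aideal_iff by blast
  have "\<forall>i\<in>set [0..<n]. f i \<in> J"
  proof
    fix i assume "i \<in> set [0..<n]"
    hence "i < n" by simp
    thus "f i \<in> J" using f(2) P by blast
  qed
  thus "a \<in> J" unfolding f(1) by (rule foldr_in_ideal[OF J(1)])
qed

lemma e00_aideal: "i < n \<Longrightarrow> e00 i \<in> aideal n"
  using e00_pideal pideal_subset_aideal by blast

section \<open>The Laurent map\<close>

text \<open>The Laurent polynomial ring \<open>K[t\<^sub>1\<^sup>\<plusminus>\<^sup>1, \<dots>, t\<^sub>n\<^sup>\<plusminus>\<^sup>1]\<close> is the group algebra of \<open>\<int>\<^sup>n\<close>,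
  modelled as \<open>(nat \<Rightarrow>\<^sub>0 int) \<Rightarrow>\<^sub>0 'k\<close>; \<open>zdeg n m\<close> is the exponent of \<open>t\<close> in the image of \<open>m\<close>.\<close>
definition zdeg :: "nat \<Rightarrow> mono \<Rightarrow> (nat \<Rightarrow>\<^sub>0 int)" where
  "zdeg n m = Abs_poly_mapping (\<lambda>i. if i < n then int (fst m i) - int (snd m i) else 0)"

lemma lookup_zdeg: "Poly_Mapping.lookup (zdeg n m) i = (if i < n then int (fst m i) - int (snd m i) else 0)"
proof -
  have "finite {i. (if i < n then int (fst m i) - int (snd m i) else 0) \<noteq> 0}"
    by (rule finite_subset[of _ "{..<n}"]) auto
  hence "Poly_Mapping.lookup (zdeg n m) = (\<lambda>i. if i < n then int (fst m i) - int (snd m i) else 0)"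
    unfolding zdeg_def by (rule lookup_Abs_poly_mapping)
  thus ?thesis by simp
qed

lemma zdeg_bmul: "zdeg n (bmul p q) = zdeg n p + zdeg n q"
  by (rule poly_mapping_eqI) (auto simp: lookup_zdeg lookup_add bmul_def min_def of_nat_diff)

lemma zdeg_mono1: "zdeg n mono1 = 0"
  by (rule poly_mapping_eqI) (simp add: lookup_zdeg mono1_def)

definition laurent :: "nat \<Rightarrow> (mono \<Rightarrow> 'k::field) \<Rightarrow> ((nat \<Rightarrow>\<^sub>0 int) \<Rightarrow>\<^sub>0 'k)" where
  "laurent n f = (\<Sum>m\<in>supp f. Poly_Mapping.single (zdeg n m) (f m))"

lemma laurent_eq_sum: assumes "finite A" "supp f \<subseteq> A"
  shows "laurent n f = (\<Sum>m\<in>A. Poly_Mapping.single (zdeg n m) (f m))"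
  unfolding laurent_def
  by (rule sum.mono_neutral_left) (use assms in \<open>auto simp: supp_def\<close>)

lemma lookup_laurent: assumes "finite (supp f)"
  shows "Poly_Mapping.lookup (laurent n f) e = (\<Sum>m\<in>supp f. if zdeg n m = e then f m else 0)"
  unfolding laurent_def lookup_sum by (simp add: lookup_single when_def)

lemma lookup_laurent_eq_sum:
  assumes "finite A" "supp f \<subseteq> A"
  shows "Poly_Mapping.lookup (laurent n f) e = (\<Sum>m\<in>A. if zdeg n m = e then f m else 0)"
  unfolding laurent_eq_sum[OF assms] lookup_sum by (simp add: lookup_single when_def)

lemma keys_laurent:
  assumes "finite (supp f)" "d \<in> Poly_Mapping.keys (laurent n f)"
  obtains m where "m \<in> supp f" "zdeg n m = d"
proof -
  have "\<exists>m\<in>supp f. zdeg n m = d"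
  proof (rule ccontr)
    assume "\<not> ?thesis"
    hence "Poly_Mapping.lookup (laurent n f) d = 0"
      unfolding lookup_laurent[OF assms(1)] by (intro sum.neutral) auto
    thus False using assms(2) by (simp add: in_keys_iff)
  qed
  thus ?thesis using that by blast
qed

lemma laurent_sadd: assumes "finite (supp f)" "finite (supp g)"
  shows "laurent n (sadd f g) = laurent n f + laurent n g"
proof -
  let ?A = "supp f \<union> supp g"
  have "laurent n (sadd f g) = (\<Sum>m\<in>?A. Poly_Mapping.single (zdeg n m) (sadd f g m))"
    by (rule laurent_eq_sum) (use assms supp_sadd in auto)
  also have "\<dots> = (\<Sum>m\<in>?A. Poly_Mapping.single (zdeg n m) (f m)) + (\<Sum>m\<in>?A. Poly_Mapping.single (zdeg n m) (g m))"
    by (simp add: sadd_def single_add sum.distrib)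
  also have "\<dots> = laurent n f + laurent n g"
    using assms by (simp add: laurent_eq_sum[symmetric])
  finally show ?thesis .
qed

lemma laurent_sneg: "laurent n (sneg f) = - laurent n f"
  unfolding laurent_def supp_sneg by (simp add: sneg_def single_uminus sum_negf)

lemma laurent_szero: "laurent n szero = 0"
  by (simp add: laurent_def)

lemma laurent_monom: "laurent n (monom p) = Poly_Mapping.single (zdeg n p) 1"
  unfolding laurent_def supp_monom by (simp add: monom_def)

lemma laurent_smult:
  fixes f g :: "mono \<Rightarrow> 'k::field"
  assumes fin: "finite (supp f)" "finite (supp g)"
  shows "laurent n (smult f g) = laurent n f * laurent n g"
proof -
  define F where "F = supp f"
  define G where "G = supp g"
  define C where "C = (\<lambda>(p,q). bmul p q) ` (F \<times> G)"
  have fF: "finite F" "finite G" using fin by (auto simp: F_def G_def)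
  hence fC: "finite C" by (auto simp: C_def)
  have sC: "supp (smult f g) \<subseteq> C" using supp_smult[OF fin] by (simp add: C_def F_def G_def)
  have fg: "\<And>r. smult f g r = (\<Sum>p\<in>F. \<Sum>q\<in>G. if bmul p q = r then f p * g q else 0)"
    by (rule smult_expand) (use fF in \<open>auto simp: F_def G_def\<close>)
  have sing_sum: "\<And>k X. Poly_Mapping.single k (sum X (S::mono set)) = (\<Sum>x\<in>S. Poly_Mapping.single k (X x :: 'k))" for S
    by (rule poly_mapping_eqI) (simp add: lookup_sum lookup_single when_def sum.If_cases)
  have "laurent n (smult f g) = (\<Sum>r\<in>C. Poly_Mapping.single (zdeg n r) (smult f g r))"
    by (rule laurent_eq_sum[OF fC sC])
  also have "\<dots> = (\<Sum>r\<in>C. \<Sum>p\<in>F. \<Sum>q\<in>G. if bmul p q = r then Poly_Mapping.single (zdeg n r) (f p * g q) else 0)"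
    unfolding fg sing_sum by (intro sum.cong refl) (simp add: if_distrib)
  also have "\<dots> = (\<Sum>p\<in>F. \<Sum>q\<in>G. \<Sum>r\<in>C. if bmul p q = r then Poly_Mapping.single (zdeg n r) (f p * g q) else 0)"
    by (subst sum.swap, rule sum.cong[OF refl], rule sum.swap)
  also have "\<dots> = (\<Sum>p\<in>F. \<Sum>q\<in>G. Poly_Mapping.single (zdeg n (bmul p q)) (f p * g q))"
    by (intro sum.cong refl, subst sum.delta') (use fC in \<open>auto simp: C_def\<close>)
  also have "\<dots> = (\<Sum>p\<in>F. \<Sum>q\<in>G. Poly_Mapping.single (zdeg n p) (f p) * Poly_Mapping.single (zdeg n q) (g q))"
    by (simp add: zdeg_bmul mult_single)
  also have "\<dots> = laurent n f * laurent n g"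
    by (simp add: laurent_def F_def G_def sum_product)
  finally show ?thesis .
qed

lemma laurent_sone: "laurent n sone = 1"
  by (simp add: sone_eq_monom laurent_monom zdeg_mono1)

definition kerlaurent :: "nat \<Rightarrow> (mono \<Rightarrow> 'k::field) set" where
  "kerlaurent n = {f \<in> Sn n. laurent n f = 0}"

lemma is_ideal_kerlaurent: "is_ideal n (kerlaurent n)"
  unfolding is_ideal_def kerlaurent_def
  by (auto simp: Sn_szero Sn_sadd Sn_sneg Sn_smult laurent_szero laurent_sadd laurent_sneg laurent_smult Sn_finite_supp)

lemma e00_kerlaurent: assumes "i < n" shows "e00 i \<in> kerlaurent n"
proof -
  have "zdeg n (delta i, delta i) = 0" by (rule poly_mapping_eqI) (simp add: lookup_zdeg)
  hence "laurent n (e00 i) = 0"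
    by (simp add: e00_def laurent_sadd laurent_sneg smult_genx_geny laurent_monom laurent_sone Sn_finite_supp)
  thus ?thesis using e00_Sn[OF assms] by (simp add: kerlaurent_def)
qed

lemma aideal_subset_kerlaurent: "aideal n \<subseteq> kerlaurent n"
  by (rule aideal_least[OF is_ideal_kerlaurent]) (simp add: e00_kerlaurent)

definition reduce :: "mono \<Rightarrow> mono" where
  "reduce m = ((\<lambda>i. fst m i - snd m i), (\<lambda>i. snd m i - fst m i))"

definition overlap :: "nat \<Rightarrow> mono \<Rightarrow> nat" where
  "overlap n m = (\<Sum>i<n. min (fst m i) (snd m i))"

lemma reduce_eq_iff_zdeg_eq: assumes "m \<in> valid_monos n" "m' \<in> valid_monos n"
  shows "reduce m = reduce m' \<longleftrightarrow> zdeg n m = zdeg n m'"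
proof
  assume "reduce m = reduce m'"
  hence D: "\<And>i. fst m i - snd m i = fst m' i - snd m' i \<and> snd m i - fst m i = snd m' i - fst m' i"
    by (auto simp: reduce_def prod_eq_iff fun_eq_iff)
  have E: "int (fst m i) - int (snd m i) = int (fst m' i) - int (snd m' i)" for i
    using D[of i] by arith
  show "zdeg n m = zdeg n m'"
    by (intro poly_mapping_eqI) (simp add: lookup_zdeg E)
next
  assume "zdeg n m = zdeg n m'"
  hence L: "\<And>i. i < n \<Longrightarrow> int (fst m i) - int (snd m i) = int (fst m' i) - int (snd m' i)"
    by (metis lookup_zdeg)
  have "fst m i - snd m i = fst m' i - snd m' i \<and> snd m i - fst m i = snd m' i - fst m' i" for i
  proof (cases "i < n")
    case True thus ?thesis using L[OF True] by linarith
  next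
    case False thus ?thesis using assms by (auto simp: valid_monos_def)
  qed
  thus "reduce m = reduce m'" by (auto simp: reduce_def prod_eq_iff fun_eq_iff)
qed

definition mono_cancel :: "nat \<Rightarrow> mono \<Rightarrow> mono" where
  "mono_cancel i m = ((\<lambda>j. fst m j - delta i j), (\<lambda>j. snd m j - delta i j))"

lemma mono_cancel_valid: "m \<in> valid_monos n \<Longrightarrow> mono_cancel i m \<in> valid_monos n"
  by (auto simp: mono_cancel_def valid_monos_def)

lemma reduce_mono_cancel: "min (fst m i) (snd m i) \<noteq> 0 \<Longrightarrow> reduce (mono_cancel i m) = reduce m"
  by (auto simp: reduce_def mono_cancel_def delta_def fun_eq_iff)

lemma overlap_mono_cancel:
  assumes "i < n" "min (fst m i) (snd m i) \<noteq> 0"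
  shows "overlap n m = Suc (overlap n (mono_cancel i m))"
proof -
  have "overlap n m = (\<Sum>j<n. min (fst (mono_cancel i m) j) (snd (mono_cancel i m) j) + (if j = i then 1 else 0))"
    unfolding overlap_def using assms by (intro sum.cong refl) (auto simp: mono_cancel_def delta_def)
  also have "\<dots> = Suc (overlap n (mono_cancel i m))" using assms by (simp add: sum.distrib overlap_def)
  finally show ?thesis .
qed

lemma reduce_eq_self:
  assumes m: "m \<in> valid_monos n" and "overlap n m = 0"
  shows "reduce m = m"
proof -
  have mz: "min (fst m i) (snd m i) = 0" for i
  proof (cases "i < n")
    case True thus ?thesis using assms(2) by (simp add: overlap_def)
  next
    case False thus ?thesis using m by (simp add: valid_monos_def split: prod.splits)
  qed
  have "fst m i - snd m i = fst m i \<and> snd m i - fst m i = snd m i" for i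
    using mz[of i] by arith
  thus ?thesis by (auto simp: reduce_def prod_eq_iff fun_eq_iff)
qed

text \<open>The difference of the two monomials is \<open>u (x\<^sub>i y\<^sub>i - 1) v\<close>.\<close>
lemma monom_mono_cancel_aideal:
  fixes m :: mono
  assumes m: "m \<in> valid_monos n" and i: "i < n" "fst m i \<ge> 1" "snd m i \<ge> 1"
  shows "sadd (monom m) (sneg (monom (mono_cancel i m))) \<in> (aideal n :: (mono \<Rightarrow> 'k::field) set)"
proof -
  define u :: mono where "u = ((\<lambda>j. fst m j - delta i j), (\<lambda>j. 0))"
  define v :: mono where "v = ((\<lambda>j. 0), (\<lambda>j. snd m j - delta i j))"
  have uv: "u \<in> valid_monos n" "v \<in> valid_monos n" using m by (auto simp: u_def v_def valid_monos_def)
  have b1: "bmul (bmul u (delta i, delta i)) v = m"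
    using i by (auto simp: bmul_def u_def v_def delta_def fun_eq_iff prod_eq_iff)
  have b2: "bmul u v = mono_cancel i m"
    by (auto simp: bmul_def u_def v_def delta_def mono_cancel_def fun_eq_iff)
  define X :: "mono \<Rightarrow> 'k" where "X = sneg (e00 i)"
  have XA: "X \<in> aideal n" unfolding X_def by (rule ideal_neg[OF is_ideal_aideal e00_aideal[OF i(1)]])
  have Xe: "X = sadd (monom (delta i, delta i)) (sneg sone)"
    by (simp add: X_def e00_def smult_genx_geny sadd_def sneg_def fun_eq_iff)
  have "smult (smult (monom u) X) (monom v) \<in> aideal n"
    by (rule ideal_multr[OF is_ideal_aideal Sn_monom[OF uv(2)]],
        rule ideal_multl[OF is_ideal_aideal Sn_monom[OF uv(1)] XA])
  moreover have "smult (smult (monom u) X) (monom v) = sadd (monom m) (sneg (monom (mono_cancel i m)))"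
    unfolding Xe
    by (simp add: smult_add_right smult_add_left smult_neg_right smult_neg_left smult_monom_monom
        finite_supp_smult b1 b2 smult_sone_right)
  ultimately show ?thesis by simp
qed

lemma monom_reduce_aideal:
  assumes "m \<in> valid_monos n"
  shows "sadd (monom m) (sneg (monom (reduce m))) \<in> (aideal n :: (mono \<Rightarrow> 'k::field) set)"
  using assms
proof (induction "overlap n m" arbitrary: m)
  case 0
  hence "reduce m = m" by (simp add: reduce_eq_self)
  moreover have "sadd (monom m) (sneg (monom m)) = (szero :: mono \<Rightarrow> 'k)"
    by (simp add: sadd_def sneg_def szero_def)
  ultimately show ?case using ideal_zero[OF is_ideal_aideal] by simp
next
  case (Suc k)
  have "\<exists>i<n. min (fst m i) (snd m i) \<noteq> 0"
  proof (rule ccontr)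
    assume "\<not> ?thesis"
    hence "overlap n m = 0" unfolding overlap_def by (intro sum.neutral) auto
    thus False using Suc(2) by simp
  qed
  then obtain i where i: "i < n" "min (fst m i) (snd m i) \<noteq> 0" by blast
  define m' where "m' = mono_cancel i m"
  have IH: "sadd (monom m') (sneg (monom (reduce m'))) \<in> (aideal n :: (mono \<Rightarrow> 'k) set)"
    using Suc overlap_mono_cancel[OF i] mono_cancel_valid by (simp add: m'_def)
  have step: "sadd (monom m) (sneg (monom m')) \<in> (aideal n :: (mono \<Rightarrow> 'k) set)"
    unfolding m'_def by (rule monom_mono_cancel_aideal[OF Suc(3) i(1)]) (use i in auto)
  have "sadd (sadd (monom m) (sneg (monom m'))) (sadd (monom m') (sneg (monom (reduce m'))))
      = (sadd (monom m) (sneg (monom (reduce m))) :: mono \<Rightarrow> 'k)"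
    using reduce_mono_cancel[OF i(2)] by (simp add: sadd_def sneg_def m'_def fun_eq_iff)
  with ideal_add[OF is_ideal_aideal step IH] show ?case by simp
qed

lemma lincomb_aideal:
  assumes "finite A" "A \<subseteq> valid_monos n"
  shows "(\<lambda>r. \<Sum>m\<in>A. c m * (monom m r - monom (reduce m) r)) \<in> (aideal n :: (mono \<Rightarrow> 'k::field) set)"
  using assms
proof (induction A rule: finite_induct)
  case empty
  show ?case using ideal_zero[OF is_ideal_aideal] by (simp add: szero_def)
next
  case (insert a A)
  have "sscale (c a) (sadd (monom a) (sneg (monom (reduce a)))) \<in> (aideal n :: (mono \<Rightarrow> 'k) set)"
    using insert by (intro ideal_sscale[OF is_ideal_aideal] monom_reduce_aideal) auto
  from ideal_add[OF is_ideal_aideal this insert.IH] insert(4)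
  show ?case using insert(1,2) by (simp add: sadd_def sscale_def sneg_def algebra_simps)
qed

lemma laurent_zero_aideal: assumes "f \<in> Sn n" "laurent n f = 0" shows "f \<in> aideal n"
proof -
  have fin: "finite (supp f)" and sv: "supp f \<subseteq> valid_monos n" using assms by (auto simp: Sn_iff)
  define h where "h = (\<lambda>r. \<Sum>m\<in>supp f. f m * (monom m r - monom (reduce m) r))"
  have hA: "h \<in> aideal n" unfolding h_def by (rule lincomb_aideal[OF fin sv])
  have "h r = f r" for r
  proof -
    have "h r = (\<Sum>m\<in>supp f. f m * monom m r) - (\<Sum>m\<in>supp f. f m * monom (reduce m) r)"
      by (simp add: h_def right_diff_distrib sum_subtractf)
    also have "(\<Sum>m\<in>supp f. f m * monom m r) = f r"
      using fin by (simp add: monom_def if_distrib sum.delta' cong: if_cong) (auto simp: supp_def)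
    also have "(\<Sum>m\<in>supp f. f m * monom (reduce m) r) = 0"
    proof (cases "\<exists>m0\<in>supp f. reduce m0 = r")
      case False
      thus ?thesis by (intro sum.neutral) (auto simp: monom_def)
    next
      case True
      then obtain m0 where m0: "m0 \<in> supp f" "reduce m0 = r" by blast
      have "(\<Sum>m\<in>supp f. f m * monom (reduce m) r) = (\<Sum>m\<in>supp f. if zdeg n m = zdeg n m0 then f m else 0)"
      proof (rule sum.cong[OF refl])
        fix m assume "m \<in> supp f"
        hence "reduce m = reduce m0 \<longleftrightarrow> zdeg n m = zdeg n m0" using reduce_eq_iff_zdeg_eq sv m0 by blast
        thus "f m * monom (reduce m) r = (if zdeg n m = zdeg n m0 then f m else 0)"
          using m0 by (auto simp: monom_def)
      qed
      also have "\<dots> = Poly_Mapping.lookup (laurent n f) (zdeg n m0)" by (simp add: lookup_laurent fin)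
      also have "\<dots> = 0" using assms by simp
      finally show ?thesis .
    qed
    finally show ?thesis by simp
  qed
  hence "h = f" by auto
  thus ?thesis using hA by simp
qed

lemma aideal_eq_kerlaurent: "aideal n = kerlaurent n"
  using aideal_subset_kerlaurent laurent_zero_aideal by (auto simp: kerlaurent_def)

lemma prime_aideal: "is_prime_ideal n (aideal n :: (mono \<Rightarrow> 'k::field) set)"
  unfolding is_prime_ideal_def aideal_eq_kerlaurent
proof (intro conjI allI impI)
  show "is_ideal n (kerlaurent n :: (mono \<Rightarrow> 'k) set)" by (rule is_ideal_kerlaurent)
  show "(kerlaurent n :: (mono \<Rightarrow> 'k) set) \<noteq> Sn n"
  proof
    assume "(kerlaurent n :: (mono \<Rightarrow> 'k) set) = Sn n"
    hence "laurent n (sone :: mono \<Rightarrow> 'k) = 0" using Sn_sone by (auto simp: kerlaurent_def)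
    thus False by (simp add: laurent_sone)
  qed
  fix I J :: "(mono \<Rightarrow> 'k) set"
  assume H: "is_ideal n I \<and> is_ideal n J \<and> (\<forall>a\<in>I. \<forall>b\<in>J. smult a b \<in> kerlaurent n)"
  show "I \<subseteq> kerlaurent n \<or> J \<subseteq> kerlaurent n"
  proof (rule ccontr)
    assume "\<not> (I \<subseteq> kerlaurent n \<or> J \<subseteq> kerlaurent n)"
    then obtain a b where ab: "a \<in> I" "a \<notin> kerlaurent n" "b \<in> J" "b \<notin> kerlaurent n" by blast
    have S: "a \<in> Sn n" "b \<in> Sn n" using H ab ideal_subset_Sn by blast+
    hence "laurent n a * laurent n b \<noteq> 0" using ab by (simp add: kerlaurent_def)
    moreover have "laurent n (smult a b) = laurent n a * laurent n b"
      using S by (intro laurent_smult) (simp_all add: Sn_finite_supp)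
    moreover have "laurent n (smult a b) = 0" using H ab by (auto simp: kerlaurent_def)
    ultimately show False by simp
  qed
qed

definition scomm :: "(mono \<Rightarrow> 'k::field) \<Rightarrow> (mono \<Rightarrow> 'k) \<Rightarrow> (mono \<Rightarrow> 'k)" where
  "scomm u v = sadd (smult u v) (sneg (smult v u))"

lemma scomm_aideal: assumes "u \<in> Sn n" "v \<in> Sn n" shows "scomm u v \<in> aideal n"
proof (rule laurent_zero_aideal)
  show "scomm u v \<in> Sn n" using assms by (simp add: scomm_def Sn_sadd Sn_sneg Sn_smult)
  show "laurent n (scomm u v) = 0" using assms
    by (simp add: scomm_def laurent_sadd laurent_sneg laurent_smult Sn_finite_supp Sn_smult finite_supp_smult mult.commute)
qed

lemma e00_eq_scomm: "e00 i = scomm (geny i) (genx i)"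
  by (simp add: e00_def scomm_def smult_geny_genx)

section \<open>Automorphisms\<close>

context
  fixes \<sigma> :: "(mono \<Rightarrow> 'k::field) \<Rightarrow> (mono \<Rightarrow> 'k)" and n :: nat
  assumes G: "\<sigma> \<in> Gn n"
begin

lemma Gn_bij: "bij_betw \<sigma> (Sn n) (Sn n)" using G by (simp add: Gn_def)
lemma Gn_sadd: "f \<in> Sn n \<Longrightarrow> g \<in> Sn n \<Longrightarrow> \<sigma> (sadd f g) = sadd (\<sigma> f) (\<sigma> g)" using G by (simp add: Gn_def)
lemma Gn_smult: "f \<in> Sn n \<Longrightarrow> g \<in> Sn n \<Longrightarrow> \<sigma> (smult f g) = smult (\<sigma> f) (\<sigma> g)" using G by (simp add: Gn_def)
lemma Gn_Sn: "f \<in> Sn n \<Longrightarrow> \<sigma> f \<in> Sn n" using Gn_bij by (auto simp: bij_betw_def)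
lemma Gn_surj: "g \<in> Sn n \<Longrightarrow> \<exists>f\<in>Sn n. g = \<sigma> f" using Gn_bij by (auto simp: bij_betw_def)

lemma Gn_szero: "\<sigma> szero = szero"
proof -
  have "\<sigma> (sadd szero szero) = sadd (\<sigma> szero) (\<sigma> szero)" by (rule Gn_sadd) (simp_all add: Sn_szero)
  moreover have "sadd szero szero = (szero :: mono \<Rightarrow> 'k)" by (simp add: sadd_def szero_def)
  ultimately have "\<sigma> szero = sadd (\<sigma> szero) (\<sigma> szero)" by simp
  hence "\<sigma> szero m = \<sigma> szero m + \<sigma> szero m" for m by (metis sadd_def)
  hence "\<sigma> szero m = 0" for m by (metis add_cancel_right_right)
  thus ?thesis by (simp add: szero_def fun_eq_iff)
qed

lemma Gn_sneg: assumes "f \<in> Sn n" shows "\<sigma> (sneg f) = sneg (\<sigma> f)"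
proof -
  have "\<sigma> (sadd f (sneg f)) = sadd (\<sigma> f) (\<sigma> (sneg f))" by (rule Gn_sadd) (simp_all add: assms Sn_sneg)
  moreover have "sadd f (sneg f) = szero" by (simp add: sadd_def sneg_def szero_def)
  ultimately have "sadd (\<sigma> f) (\<sigma> (sneg f)) = szero" using Gn_szero by simp
  hence "\<sigma> f m + \<sigma> (sneg f) m = 0" for m by (metis sadd_def szero_def)
  hence "\<sigma> (sneg f) m = - \<sigma> f m" for m by (metis add_eq_0_iff)
  thus ?thesis by (simp add: sneg_def fun_eq_iff)
qed

lemma Gn_scomm: "u \<in> Sn n \<Longrightarrow> v \<in> Sn n \<Longrightarrow> \<sigma> (scomm u v) = scomm (\<sigma> u) (\<sigma> v)"
  by (simp add: scomm_def Gn_sadd Gn_sneg Gn_smult Sn_smult Sn_sneg)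

lemma is_ideal_Gn_preimage:
  assumes I: "is_ideal n I" shows "is_ideal n {f \<in> Sn n. \<sigma> f \<in> I}"
  unfolding is_ideal_def
proof (intro conjI ballI)
  show "szero \<in> {f \<in> Sn n. \<sigma> f \<in> I}" by (simp add: Sn_szero Gn_szero ideal_zero[OF I])
  show "sadd a b \<in> {f \<in> Sn n. \<sigma> f \<in> I}" if "a \<in> {f \<in> Sn n. \<sigma> f \<in> I}" "b \<in> {f \<in> Sn n. \<sigma> f \<in> I}" for a b
    using that by (auto simp: Sn_sadd Gn_sadd intro: ideal_add[OF I])
  show "sneg a \<in> {f \<in> Sn n. \<sigma> f \<in> I}" if "a \<in> {f \<in> Sn n. \<sigma> f \<in> I}" for a
    using that by (auto simp: Sn_sneg Gn_sneg intro: ideal_neg[OF I])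
  show "smult r a \<in> {f \<in> Sn n. \<sigma> f \<in> I}" if "r \<in> Sn n" "a \<in> {f \<in> Sn n. \<sigma> f \<in> I}" for r a
    using that by (auto simp: Sn_smult Gn_smult Gn_Sn intro: ideal_multl[OF I])
  show "smult a r \<in> {f \<in> Sn n. \<sigma> f \<in> I}" if "r \<in> Sn n" "a \<in> {f \<in> Sn n. \<sigma> f \<in> I}" for r a
    using that by (auto simp: Sn_smult Gn_smult Gn_Sn intro: ideal_multr[OF I])
qed auto

lemma is_ideal_Gn_image:
  assumes I: "is_ideal n I" shows "is_ideal n (\<sigma> ` I)"
  unfolding is_ideal_def
proof (intro conjI ballI)
  have IS: "I \<subseteq> Sn n" using I ideal_subset_Sn by blast
  show "\<sigma> ` I \<subseteq> Sn n" using IS Gn_Sn by blast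
  show "szero \<in> \<sigma> ` I" using Gn_szero ideal_zero[OF I] by (metis image_eqI)
  show "sadd a b \<in> \<sigma> ` I" if ab: "a \<in> \<sigma> ` I" "b \<in> \<sigma> ` I" for a b
  proof -
    obtain a' b' where "a' \<in> I" "b' \<in> I" "a = \<sigma> a'" "b = \<sigma> b'" using ab by auto
    moreover hence "sadd a b = \<sigma> (sadd a' b')" using IS Gn_sadd[of a' b'] by (metis subsetD)
    ultimately show ?thesis using ideal_add[OF I] by blast
  qed
  show "sneg a \<in> \<sigma> ` I" if a: "a \<in> \<sigma> ` I" for a
  proof -
    obtain a' where "a' \<in> I" "a = \<sigma> a'" using a by auto
    moreover hence "sneg a = \<sigma> (sneg a')" using IS Gn_sneg[of a'] by (metis subsetD)
    ultimately show ?thesis using ideal_neg[OF I] by blast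
  qed
  show "smult r a \<in> \<sigma> ` I" "smult a r \<in> \<sigma> ` I" if r: "r \<in> Sn n" and a: "a \<in> \<sigma> ` I" for r a
  proof -
    obtain a' where a': "a' \<in> I" "a = \<sigma> a'" using a by auto
    obtain r' where r': "r' \<in> Sn n" "r = \<sigma> r'" using Gn_surj r by blast
    have "smult r a = \<sigma> (smult r' a')" "smult a r = \<sigma> (smult a' r')"
      using IS Gn_smult[of r' a'] Gn_smult[of a' r'] a' r' by (metis subsetD)+
    thus "smult r a \<in> \<sigma> ` I" "smult a r \<in> \<sigma> ` I"
      using ideal_multl[OF I r'(1) a'(1)] ideal_multr[OF I r'(1) a'(1)] by auto
  qed
qed

lemma Gn_image_aideal: "\<sigma> ` aideal n = aideal n"
proof
  have "aideal n \<subseteq> {f \<in> Sn n. \<sigma> f \<in> aideal n}"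
  proof (rule aideal_least[OF is_ideal_Gn_preimage[OF is_ideal_aideal]], intro allI impI)
    fix i assume i: "i < n"
    have "\<sigma> (e00 i) = scomm (\<sigma> (geny i)) (\<sigma> (genx i))"
      unfolding e00_eq_scomm by (rule Gn_scomm) (simp_all add: genx_Sn geny_Sn i)
    also have "\<dots> \<in> aideal n" by (rule scomm_aideal) (simp_all add: Gn_Sn genx_Sn geny_Sn i)
    finally show "e00 i \<in> {f \<in> Sn n. \<sigma> f \<in> aideal n}" using e00_Sn[OF i] by simp
  qed
  thus "\<sigma> ` aideal n \<subseteq> aideal n" by auto
  show "aideal n \<subseteq> \<sigma> ` aideal n"
  proof (rule aideal_least[OF is_ideal_Gn_image[OF is_ideal_aideal]], intro allI impI)
    fix i assume i: "i < n"
    obtain x' where x': "x' \<in> Sn n" "genx i = \<sigma> x'" using Gn_surj genx_Sn[OF i] by blast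
    obtain y' where y': "y' \<in> Sn n" "geny i = \<sigma> y'" using Gn_surj geny_Sn[OF i] by blast
    have "e00 i = \<sigma> (scomm y' x')" unfolding e00_eq_scomm x' y' by (rule Gn_scomm[symmetric]) fact+
    moreover have "scomm y' x' \<in> aideal n" by (rule scomm_aideal) fact+
    ultimately show "e00 i \<in> \<sigma> ` aideal n" by blast
  qed
qed

end

lemma weight_aut_Gn:
  fixes c :: "mono \<Rightarrow> 'k::field"
  assumes cm: "\<And>p q. c (bmul p q) = c p * c q" and c0: "c mono1 = 1" and cnz: "\<And>m. c m \<noteq> 0"
  shows "(\<lambda>f. \<lambda>m. c m * f m) \<in> Gn n"
proof -
  let ?s = "\<lambda>f::mono \<Rightarrow> 'k. \<lambda>m. c m * f m"
  let ?t = "\<lambda>f::mono \<Rightarrow> 'k. \<lambda>m. f m / c m"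
  have supp_s: "supp (?s f) = supp f" for f using cnz by (auto simp: supp_def)
  have supp_t: "supp (?t f) = supp f" for f using cnz by (auto simp: supp_def)
  have sS: "?s f \<in> Sn n" if "f \<in> Sn n" for f using that supp_s by (simp add: Sn_iff)
  have tS: "?t f \<in> Sn n" if "f \<in> Sn n" for f using that supp_t by (simp add: Sn_iff)
  have "bij_betw ?s (Sn n) (Sn n)"
    by (rule bij_betw_byWitness[where f'="?t"]) (use sS tS cnz in auto)
  moreover have "?s (smult f g) = smult (?s f) (?s g)" if "f \<in> Sn n" "g \<in> Sn n" for f g
  proof
    fix m
    have fin: "finite (supp f)" "finite (supp g)" using that by (auto simp: Sn_iff)
    have "smult (?s f) (?s g) m = (\<Sum>p\<in>supp f. \<Sum>q\<in>supp g. if bmul p q = m then c p * f p * (c q * g q) else 0)"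
      by (rule smult_expand) (use fin supp_s in auto)
    also have "\<dots> = (\<Sum>p\<in>supp f. \<Sum>q\<in>supp g. c m * (if bmul p q = m then f p * g q else 0))"
      by (intro sum.cong refl) (auto simp: cm[symmetric] ac_simps)
    also have "\<dots> = c m * smult f g m"
      by (simp add: sum_distrib_left smult_expand[OF fin(1) _ fin(2)])
    finally show "?s (smult f g) m = smult (?s f) (?s g) m" by simp
  qed
  moreover have "?s sone = sone" using c0 by (auto simp: sone_def mono1_def[symmetric] fun_eq_iff)
  ultimately show ?thesis
    by (auto simp: Gn_def sadd_def sscale_def algebra_simps)
qed

lemma supp_comp_involution:
  assumes inv: "\<And>m. pm (pm m) = m"
  shows "supp (\<lambda>m. f (pm m)) = pm ` supp f"
proof
  show "supp (\<lambda>m. f (pm m)) \<subseteq> pm ` supp f"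
  proof
    fix m assume "m \<in> supp (\<lambda>m. f (pm m))"
    hence "pm (pm m) \<in> pm ` supp f" by (simp add: supp_def)
    thus "m \<in> pm ` supp f" by (simp add: inv)
  qed
  show "pm ` supp f \<subseteq> supp (\<lambda>m. f (pm m))" by (auto simp: supp_def inv)
qed

lemma smult_comp_involution:
  fixes f g :: "mono \<Rightarrow> 'k::field"
  assumes inv: "\<And>m. pm (pm m) = m" and pb: "\<And>p q. pm (bmul p q) = bmul (pm p) (pm q)"
    and fin: "finite (supp f)" "finite (supp g)"
  shows "smult (\<lambda>m. f (pm m)) (\<lambda>m. g (pm m)) = (\<lambda>m. smult f g (pm m))"
proof
  fix m
  have ip: "inj pm" by (rule injI) (metis inv)
  have "smult (\<lambda>m. f (pm m)) (\<lambda>m. g (pm m)) m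
      = (\<Sum>p\<in>pm ` supp f. \<Sum>q\<in>pm ` supp g. if bmul p q = m then f (pm p) * g (pm q) else 0)"
    by (rule smult_expand) (use fin supp_comp_involution[OF inv] in auto)
  also have "\<dots> = (\<Sum>p\<in>supp f. \<Sum>q\<in>supp g.
      if bmul (pm p) (pm q) = m then f (pm (pm p)) * g (pm (pm q)) else 0)"
    by (simp add: sum.reindex inj_on_subset[OF ip] o_def)
  also have "\<dots> = (\<Sum>p\<in>supp f. \<Sum>q\<in>supp g. if bmul p q = pm m then f p * g q else 0)"
    by (intro sum.cong refl) (metis (no_types, lifting) inv pb)
  also have "\<dots> = smult f g (pm m)"
    by (simp add: smult_expand[OF fin(1) _ fin(2)])
  finally show "smult (\<lambda>m. f (pm m)) (\<lambda>m. g (pm m)) m = smult f g (pm m)" .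
qed

lemma perm_aut_Gn:
  fixes pm :: "mono \<Rightarrow> mono"
  assumes inv: "\<And>m. pm (pm m) = m" and pb: "\<And>p q. pm (bmul p q) = bmul (pm p) (pm q)"
    and pu: "pm mono1 = mono1" and pv: "\<And>m. m \<in> valid_monos n \<Longrightarrow> pm m \<in> valid_monos n"
  shows "(\<lambda>f::mono \<Rightarrow> 'k::field. \<lambda>m. f (pm m)) \<in> Gn n"
proof -
  let ?s = "\<lambda>f::mono \<Rightarrow> 'k. \<lambda>m. f (pm m)"
  have sS: "?s f \<in> Sn n" if "f \<in> Sn n" for f
  proof -
    have "supp (?s f) = pm ` supp f" by (rule supp_comp_involution[OF inv])
    thus ?thesis using that pv by (auto simp: Sn_iff)
  qed
  have "bij_betw ?s (Sn n) (Sn n)"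
    by (rule bij_betw_byWitness[where f'="?s"]) (use sS inv in \<open>auto simp: o_def\<close>)
  moreover have "?s sone = sone"
  proof
    fix m
    have "pm m = mono1 \<longleftrightarrow> m = mono1" by (metis inv pu)
    thus "?s sone m = sone m" by (simp add: sone_def mono1_def[symmetric])
  qed
  moreover have "?s (smult f g) = smult (?s f) (?s g)" if "f \<in> Sn n" "g \<in> Sn n" for f g
    by (rule smult_comp_involution[OF inv pb, symmetric]) (use that in \<open>simp_all add: Sn_finite_supp\<close>)
  ultimately show ?thesis by (auto simp: Gn_def sadd_def sscale_def)
qed

definition swap_idx :: "nat \<Rightarrow> nat \<Rightarrow> nat \<Rightarrow> nat" where
  "swap_idx i j k = (if k = i then j else if k = j then i else k)"

definition swap_mono :: "nat \<Rightarrow> nat \<Rightarrow> mono \<Rightarrow> mono" where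
  "swap_mono i j m = (fst m \<circ> swap_idx i j, snd m \<circ> swap_idx i j)"

lemma swap_aut_Gn:
  assumes "i < n" "j < n"
  shows "(\<lambda>f::mono \<Rightarrow> 'k::field. \<lambda>m. f (swap_mono i j m)) \<in> Gn n"
  by (rule perm_aut_Gn) (use assms in \<open>auto simp: swap_mono_def swap_idx_def bmul_def mono1_def valid_monos_def fun_eq_iff\<close>)

lemma swap_e00: "(\<lambda>m. e00 i (swap_mono i j m)) = (e00 j :: mono \<Rightarrow> 'k::field)"
proof -
  have pinv: "swap_mono i j (swap_mono i j m) = m" for m
    by (auto simp: swap_mono_def swap_idx_def fun_eq_iff prod_eq_iff)
  have eqv: "swap_mono i j m = X \<longleftrightarrow> m = swap_mono i j X" for m X by (metis pinv)
  have pu: "swap_mono i j mono1 = mono1" by (simp add: swap_mono_def mono1_def o_def)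
  have pd: "swap_mono i j (delta i, delta i) = (delta j, delta j)"
    by (auto simp: swap_mono_def delta_def swap_idx_def fun_eq_iff)
  show ?thesis unfolding e00_eq by (simp only: eqv pu pd)
qed

definition torus_weight :: "nat \<Rightarrow> 'k::field \<Rightarrow> mono \<Rightarrow> 'k" where
  "torus_weight i l m = l powi (int (fst m i) - int (snd m i))"

lemma torus_aut_Gn:
  assumes "l \<noteq> 0"
  shows "(\<lambda>f. \<lambda>m. torus_weight i l m * f m) \<in> Gn n"
proof (rule weight_aut_Gn)
  show "torus_weight i l (bmul p q) = torus_weight i l p * torus_weight i l q" for p q
  proof -
    have "int (fst (bmul p q) i) - int (snd (bmul p q) i) = (int (fst p i) - int (snd p i)) + (int (fst q i) - int (snd q i))"
      by (auto simp: bmul_def min_def of_nat_diff)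
    thus ?thesis using assms by (simp add: torus_weight_def power_int_add)
  qed
  show "torus_weight i l mono1 = 1" by (simp add: torus_weight_def mono1_def)
  show "torus_weight i l m \<noteq> 0" for m using assms by (simp add: torus_weight_def)
qed

section \<open>Eliminating variables from a nonzero prime ideal\<close>

definition is_linear :: "nat \<Rightarrow> ((mono \<Rightarrow> 'k::field) \<Rightarrow> (mono \<Rightarrow> 'k)) \<Rightarrow> bool" where
  "is_linear n F \<longleftrightarrow> (\<forall>f\<in>Sn n. \<forall>g\<in>Sn n. F (sadd f g) = sadd (F f) (F g)) \<and>
     (\<forall>f\<in>Sn n. \<forall>c. F (sscale c f) = sscale c (F f))"

lemma is_linear_szero:
  fixes F :: "(mono \<Rightarrow> 'k::field) \<Rightarrow> (mono \<Rightarrow> 'k)"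
  assumes "is_linear n F" shows "F szero = szero"
proof -
  have "F (sscale 0 szero) = sscale 0 (F szero)" using assms by (simp add: is_linear_def Sn_szero)
  moreover have "sscale 0 szero = (szero :: mono \<Rightarrow> 'k)" "sscale 0 (F szero) = szero"
    by (simp_all add: sscale_def szero_def fun_eq_iff)
  ultimately show ?thesis by simp
qed

lemma is_linear_monom_sadd:
  assumes F: "is_linear n F" and m: "m \<in> valid_monos n" and g: "g \<in> Sn n"
  shows "F (sadd (sscale c (monom m)) g) = sadd (sscale c (F (monom m))) (F g)"
  using F Sn_sscale[OF Sn_monom[OF m]] Sn_monom[OF m] g unfolding is_linear_def by metis

lemma is_linear_eq_on_monoms:
  fixes F G :: "(mono \<Rightarrow> 'k::field) \<Rightarrow> (mono \<Rightarrow> 'k)"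
  assumes F: "is_linear n F" and G: "is_linear n G"
    and M: "\<And>m. m \<in> valid_monos n \<Longrightarrow> F (monom m) = G (monom m)" and h: "h \<in> Sn n"
  shows "F h = G h"
proof -
  have "finite (supp h)" "supp h \<subseteq> valid_monos n" using h by (auto simp: Sn_iff)
  thus ?thesis
  proof (rule finite_support_induct[where Q = "\<lambda>h. F h = G h"])
    show "F szero = G szero" using is_linear_szero[OF F] is_linear_szero[OF G] by simp
  next
    fix m c and g :: "mono \<Rightarrow> 'k"
    assume "m \<in> valid_monos n" "finite (supp g)" "supp g \<subseteq> valid_monos n" "F g = G g"
    thus "F (sadd (sscale c (monom m)) g) = G (sadd (sscale c (monom m)) g)"
      using is_linear_monom_sadd[OF F] is_linear_monom_sadd[OF G] M by (simp add: Sn_iff)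
  qed
qed

lemma is_linear_mem_ideal_on_monoms:
  fixes F :: "(mono \<Rightarrow> 'k::field) \<Rightarrow> (mono \<Rightarrow> 'k)"
  assumes F: "is_linear n F" and P: "is_ideal n P"
    and M: "\<And>m. m \<in> valid_monos n \<Longrightarrow> F (monom m) \<in> P" and h: "h \<in> Sn n"
  shows "F h \<in> P"
proof -
  have "finite (supp h)" "supp h \<subseteq> valid_monos n" using h by (auto simp: Sn_iff)
  thus ?thesis
  proof (rule finite_support_induct[where Q = "\<lambda>h. F h \<in> P"])
    show "F szero \<in> P" using is_linear_szero[OF F] ideal_zero[OF P] by simp
  next
    fix m c and g :: "mono \<Rightarrow> 'k"
    assume "m \<in> valid_monos n" "finite (supp g)" "supp g \<subseteq> valid_monos n" "F g \<in> P"
    thus "F (sadd (sscale c (monom m)) g) \<in> P"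
      using is_linear_monom_sadd[OF F] M ideal_add[OF P] ideal_sscale[OF P] by (simp add: Sn_iff)
  qed
qed

lemma is_linear_smult_left: "a \<in> Sn n \<Longrightarrow> is_linear n (\<lambda>h. smult a h)"
  by (auto simp: is_linear_def smult_add_right smult_scale_right Sn_finite_supp)

lemma is_linear_smult_right: "a \<in> Sn n \<Longrightarrow> is_linear n (\<lambda>h. smult h a)"
  by (auto simp: is_linear_def smult_add_left smult_scale_left Sn_finite_supp)

lemma is_linear_comp:
  "is_linear n F \<Longrightarrow> is_linear n G \<Longrightarrow> (\<And>f. f \<in> Sn n \<Longrightarrow> G f \<in> Sn n) \<Longrightarrow> is_linear n (\<lambda>h. F (G h))"
  by (auto simp: is_linear_def Sn_sadd Sn_sscale)

definition supported_on :: "nat set \<Rightarrow> (mono \<Rightarrow> 'k::field) \<Rightarrow> bool" where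
  "supported_on T f \<longleftrightarrow> (\<forall>m. f m \<noteq> 0 \<longrightarrow> (\<forall>j. j \<notin> T \<longrightarrow> fst m j = 0 \<and> snd m j = 0))"

lemma supported_onD: "supported_on T f \<Longrightarrow> f m \<noteq> 0 \<Longrightarrow> j \<notin> T \<Longrightarrow> fst m j = 0 \<and> snd m j = 0"
  unfolding supported_on_def by blast

lemma supported_on_monom:
  "supported_on T (monom m) \<longleftrightarrow> (\<forall>j. j \<notin> T \<longrightarrow> fst m j = 0 \<and> snd m j = 0)"
  by (auto simp: supported_on_def monom_def simp del: split_paired_All)

lemma smult_commute_disjoint:
  fixes f g :: "mono \<Rightarrow> 'k::field"
  assumes fin: "finite (supp f)" "finite (supp g)"
    and s: "supported_on T f" "supported_on U g" "T \<inter> U = {}"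
  shows "smult f g = smult g f"
proof
  fix m
  have bc: "bmul p q = bmul q p" if "p \<in> supp f" "q \<in> supp g" for p q
  proof -
    have D: "(fst p j = 0 \<and> snd p j = 0) \<or> (fst q j = 0 \<and> snd q j = 0)" for j
    proof (cases "j \<in> T")
      case True
      hence "j \<notin> U" using s(3) by auto
      thus ?thesis using supported_onD[OF s(2), of q j] that by (simp add: supp_def)
    next
      case False
      thus ?thesis using supported_onD[OF s(1), of p j] that by (simp add: supp_def)
    qed
    have "fst (bmul p q) j = fst (bmul q p) j \<and> snd (bmul p q) j = snd (bmul q p) j" for j
      using D[of j] by (auto simp: bmul_def)
    thus ?thesis by (simp add: prod_eq_iff fun_eq_iff)
  qed
  have "smult f g m = (\<Sum>p\<in>supp f. \<Sum>q\<in>supp g. if bmul p q = m then f p * g q else 0)"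
    by (rule smult_expand) (use fin in auto)
  also have "\<dots> = (\<Sum>q\<in>supp g. \<Sum>p\<in>supp f. if bmul q p = m then g q * f p else 0)"
    by (subst sum.swap) (intro sum.cong refl, simp add: bc mult.commute)
  also have "\<dots> = smult g f m"
    by (rule smult_expand[symmetric]) (use fin in auto)
  finally show "smult f g m = smult g f m" .
qed

lemma supported_on_smult:
  assumes "finite (supp f)" "finite (supp g)" "supported_on T f" "supported_on T g"
  shows "supported_on T (smult f g)"
  unfolding supported_on_def
proof (intro allI impI)
  fix m j assume "smult f g m \<noteq> 0" "j \<notin> T"
  hence "m \<in> supp (smult f g)" by (simp add: supp_def)
  then obtain p q where "p \<in> supp f" "q \<in> supp g" "m = bmul p q"
    using supp_smult[OF assms(1,2)] by auto
  with supported_onD[OF assms(3), of p j] supported_onD[OF assms(4), of q j] \<open>j \<notin> T\<close>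
  show "fst m j = 0 \<and> snd m j = 0" by (simp add: supp_def bmul_def)
qed

lemma finite_supp_e00: "finite (supp (e00 i))"
  by (rule finite_subset[of _ "{mono1, (delta i, delta i)}"]) (auto simp: e00_eq supp_def split: if_splits)

lemma e00_supported: "supported_on {i} (e00 i)"
  by (auto simp: supported_on_def e00_eq mono1_def delta_def split: if_splits)

definition free_part :: "nat \<Rightarrow> (mono \<Rightarrow> 'k::field) \<Rightarrow> (mono \<Rightarrow> 'k)" where
  "free_part i h = (\<lambda>m. if fst m i = 0 \<and> snd m i = 0 then h m else 0)"

lemma free_part_Sn: "h \<in> Sn n \<Longrightarrow> free_part i h \<in> Sn n"
proof -
  assume "h \<in> Sn n"
  moreover have "supp (free_part i h) \<subseteq> supp h" by (auto simp: supp_def free_part_def)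
  ultimately show ?thesis by (auto simp: Sn_iff intro: finite_subset)
qed

lemma is_linear_free_part: "is_linear n (free_part i)"
  by (auto simp: is_linear_def free_part_def sadd_def sscale_def fun_eq_iff)

lemma supported_on_free_part:
  assumes "supported_on (insert i T) h" shows "supported_on T (free_part i h)"
  unfolding supported_on_def
proof (intro allI impI)
  fix m j assume "free_part i h m \<noteq> 0" "j \<notin> T"
  hence "h m \<noteq> 0" "fst m i = 0 \<and> snd m i = 0" by (auto simp: free_part_def split: if_splits)
  thus "fst m j = 0 \<and> snd m j = 0" using supported_onD[OF assms, of m j] \<open>j \<notin> T\<close> by (cases "j = i") auto
qed

definition del_coord :: "nat \<Rightarrow> mono \<Rightarrow> mono" where
  "del_coord i m = ((\<lambda>j. if j = i then 0 else fst m j), (\<lambda>j. if j = i then 0 else snd m j))"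

definition only_coord :: "nat \<Rightarrow> mono \<Rightarrow> mono" where
  "only_coord i m = ((\<lambda>j. if j = i then fst m j else 0), (\<lambda>j. if j = i then snd m j else 0))"

lemma bmul_del_only_coord: "bmul (del_coord i m) (only_coord i m) = m"
  by (auto simp: bmul_def del_coord_def only_coord_def fun_eq_iff prod_eq_iff)

lemma del_coord_valid: "m \<in> valid_monos n \<Longrightarrow> del_coord i m \<in> valid_monos n"
  and only_coord_valid: "m \<in> valid_monos n \<Longrightarrow> only_coord i m \<in> valid_monos n"
  by (auto simp: valid_monos_def del_coord_def only_coord_def)

lemma e00_eq_monom: "e00 i = sadd sone (sneg (monom (delta i, delta i)))"
  by (simp add: e00_def smult_genx_geny)

lemma smult_e00_monom: "smult (e00 i) (monom m) = sadd (monom m) (sneg (monom (bmul (delta i, delta i) m)))"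
  by (simp add: e00_eq_monom smult_add_left smult_neg_left smult_sone_left smult_monom_monom)

lemma smult_monom_e00: "smult (monom m) (e00 i) = sadd (monom m) (sneg (monom (bmul m (delta i, delta i))))"
  by (simp add: e00_eq_monom smult_add_right smult_neg_right smult_sone_right smult_monom_monom)

lemma sadd_sneg_self: "sadd f (sneg f) = szero"
  by (simp add: sadd_def sneg_def szero_def fun_eq_iff)

lemma e00_idem: "smult (e00 i) (e00 i) = (e00 i :: mono \<Rightarrow> 'k::field)"
proof -
  have "bmul (delta i, delta i) (delta i, delta i) = (delta i, delta i)"
    by (auto simp: bmul_def delta_def fun_eq_iff)
  hence Z: "smult (monom (delta i, delta i)) (e00 i) = (szero :: mono \<Rightarrow> 'k)"
    by (simp add: smult_monom_e00 sadd_sneg_self)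
  have "smult (sadd sone (sneg (monom (delta i, delta i)))) (e00 i)
      = sadd (smult sone (e00 i)) (smult (sneg (monom (delta i, delta i))) (e00 i :: mono \<Rightarrow> 'k))"
    by (rule smult_add_left) (simp_all add: finite_supp_e00)
  also have "\<dots> = sadd (e00 i) (sneg (smult (monom (delta i, delta i)) (e00 i :: mono \<Rightarrow> 'k)))"
    by (simp add: smult_sone_left smult_neg_left finite_supp_e00)
  also have "\<dots> = e00 i" using Z by (simp add: sadd_def sneg_def szero_def)
  finally show ?thesis by (simp only: e00_eq_monom[symmetric])
qed

lemma smult_e00_monom_zero: "fst m i > 0 \<Longrightarrow> smult (e00 i) (monom m) = szero"
proof -
  assume "fst m i > 0"
  hence "bmul (delta i, delta i) m = m" by (auto simp: bmul_def delta_def fun_eq_iff prod_eq_iff min_def)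
  thus ?thesis by (simp add: smult_e00_monom sadd_sneg_self)
qed

lemma smult_monom_e00_zero: "snd m i > 0 \<Longrightarrow> smult (monom m) (e00 i) = szero"
proof -
  assume "snd m i > 0"
  hence "bmul m (delta i, delta i) = m" by (auto simp: bmul_def delta_def fun_eq_iff prod_eq_iff min_def)
  thus ?thesis by (simp add: smult_monom_e00 sadd_sneg_self)
qed

lemma e00_monom_e00:
  "smult (smult (e00 i) (monom m)) (e00 i) = smult (e00 i) (free_part i (monom m) :: mono \<Rightarrow> 'k::field)"
proof (cases "fst m i = 0 \<and> snd m i = 0")
  case True
  hence "smult (e00 i) (monom m) = smult (monom m) (e00 i :: mono \<Rightarrow> 'k)"
    by (intro smult_commute_disjoint[OF finite_supp_e00 _ e00_supported, of _ "- {i}"])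
      (auto simp: supported_on_monom)
  moreover have "free_part i (monom m) = (monom m :: mono \<Rightarrow> 'k)"
    using True by (auto simp: free_part_def monom_def fun_eq_iff)
  ultimately show ?thesis by (simp add: smult_assoc finite_supp_e00 e00_idem)
next
  case False
  hence R: "free_part i (monom m) = (szero :: mono \<Rightarrow> 'k)"
    by (auto simp: free_part_def monom_def fun_eq_iff szero_def)
  show ?thesis
  proof (cases "fst m i > 0")
    case True
    thus ?thesis by (simp add: R smult_e00_monom_zero smult_zero_left smult_zero_right)
  next
    case False
    hence "smult (monom m) (e00 i) = (szero :: mono \<Rightarrow> 'k)"
      using \<open>\<not> (fst m i = 0 \<and> snd m i = 0)\<close> by (intro smult_monom_e00_zero) simp
    thus ?thesis by (simp add: R smult_assoc finite_supp_e00 smult_zero_right)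
  qed
qed

lemma e00_sandwich:
  fixes h :: "mono \<Rightarrow> 'k::field"
  assumes i: "i < n" and h: "h \<in> Sn n"
  shows "smult (smult (e00 i) h) (e00 i) = smult (e00 i) (free_part i h)"
proof (rule is_linear_eq_on_monoms[OF _ _ _ h])
  have ES: "(e00 i :: mono \<Rightarrow> 'k) \<in> Sn n" by (rule e00_Sn[OF i])
  show "is_linear n (\<lambda>h. smult (smult (e00 i) h) (e00 i :: mono \<Rightarrow> 'k))"
    by (rule is_linear_comp[OF is_linear_smult_right[OF ES] is_linear_smult_left[OF ES]])
      (simp add: Sn_smult ES)
  show "is_linear n (\<lambda>h. smult (e00 i) (free_part i h :: mono \<Rightarrow> 'k))"
    by (rule is_linear_comp[OF is_linear_smult_left[OF ES] is_linear_free_part]) (simp add: free_part_Sn)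
qed (rule e00_monom_e00)

lemma smult_e00_monom_commute:
  fixes g :: "mono \<Rightarrow> 'k::field"
  assumes fg: "finite (supp g)" and gT: "supported_on T g" "i \<notin> T"
  shows "smult (smult (e00 i) (monom m)) g
    = smult (monom (del_coord i m)) (smult (smult (e00 i) g) (monom (only_coord i m)))"
proof -
  have C1: "smult (monom (only_coord i m)) g = smult g (monom (only_coord i m))"
    by (rule smult_commute_disjoint[of _ _ "{i}" T]) (use fg gT in \<open>auto simp: supported_on_monom only_coord_def\<close>)
  have C2: "smult (e00 i) (monom (del_coord i m)) = smult (monom (del_coord i m)) (e00 i :: mono \<Rightarrow> 'k)"
    by (rule smult_commute_disjoint[of _ _ "{i}" "- {i}"])
      (use finite_supp_e00 e00_supported in \<open>auto simp: supported_on_monom del_coord_def\<close>)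
  have "monom m = smult (monom (del_coord i m)) (monom (only_coord i m) :: mono \<Rightarrow> 'k)"
    by (simp add: smult_monom_monom bmul_del_only_coord)
  hence "smult (smult (e00 i) (monom m)) g
      = smult (e00 i) (smult (monom (del_coord i m)) (smult (monom (only_coord i m)) g))"
    by (simp add: smult_assoc finite_supp_e00 fg finite_supp_smult)
  also have "\<dots> = smult (smult (e00 i) (monom (del_coord i m))) (smult g (monom (only_coord i m)))"
    by (simp add: smult_assoc finite_supp_e00 fg finite_supp_smult C1)
  also have "\<dots> = smult (monom (del_coord i m)) (smult (smult (e00 i) g) (monom (only_coord i m)))"
    by (simp add: C2 smult_assoc finite_supp_e00 fg finite_supp_smult)
  finally show ?thesis .
qed

lemma prime_e00_or_free:
  fixes g :: "mono \<Rightarrow> 'k::field"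
  assumes P: "is_prime_ideal n P" and i: "i < n" and gS: "g \<in> Sn n"
    and gT: "supported_on T g" "i \<notin> T" and eg: "smult (e00 i) g \<in> P"
  shows "e00 i \<in> P \<or> g \<in> P"
proof (rule prime_idealD_sandwich[OF P e00_Sn[OF i] gS], intro ballI)
  have IP: "is_ideal n P" using P by (simp add: is_prime_ideal_def)
  have ES: "(e00 i :: mono \<Rightarrow> 'k) \<in> Sn n" by (rule e00_Sn[OF i])
  have lin: "is_linear n (\<lambda>s. smult (smult (e00 i) s) g)"
    by (rule is_linear_comp[OF is_linear_smult_right[OF gS] is_linear_smult_left[OF ES]])
      (simp add: Sn_smult ES)
  have M: "smult (smult (e00 i) (monom m)) g \<in> P" if "m \<in> valid_monos n" for m
    unfolding smult_e00_monom_commute[OF Sn_finite_supp[OF gS] gT]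
    by (intro ideal_multl[OF IP] ideal_multr[OF IP] eg Sn_monom del_coord_valid only_coord_valid that)
  fix s :: "mono \<Rightarrow> 'k" assume "s \<in> Sn n"
  from is_linear_mem_ideal_on_monoms[OF lin IP M this] show "smult (smult (e00 i) s) g \<in> P" .
qed

lemma monom_sandwich_apply:
  fixes g :: "mono \<Rightarrow> 'k::field"
  assumes fg: "finite (supp g)"
  shows "smult (smult (monom y) g) (monom x) m = (\<Sum>q\<in>supp g. if bmul (bmul y q) x = m then g q else 0)"
proof -
  have "smult (smult (monom y) g) (monom x) m
      = (\<Sum>p\<in>supp (monom y :: mono \<Rightarrow> 'k). \<Sum>q\<in>supp g. \<Sum>s\<in>supp (monom x :: mono \<Rightarrow> 'k).
        if bmul (bmul p q) s = m then monom y p * g q * monom x s else 0)"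
    by (rule smult_smult_expand_left) (simp_all add: fg)
  also have "\<dots> = (\<Sum>q\<in>supp g. if bmul (bmul y q) x = m then g q else 0)"
    unfolding supp_monom
    by (simp only: sum.insert_remove finite.emptyI sum.empty Diff_empty empty_Diff add_0_right)
      (intro sum.cong refl, simp add: monom_def)
  finally show ?thesis .
qed

text \<open>Multiplying by \<open>y\<^sub>i\<^sup>k\<close> on the left and \<open>x\<^sub>i\<^sup>l\<close> on the right, with \<open>k\<close> the least \<open>x\<^sub>i\<close>-degree
  in the support, sends exactly one monomial to a monomial free of \<open>x\<^sub>i, y\<^sub>i\<close>.\<close>
lemma bmul_strip_coord_eq_iff:
  assumes "k \<le> fst q i" "fst m i = k"
  shows "bmul (bmul ((\<lambda>j. 0), (\<lambda>j. if j = i then k else 0)) q) ((\<lambda>j. if j = i then snd m i else 0), (\<lambda>j. 0))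
      = del_coord i m \<longleftrightarrow> q = m"
proof -
  let ?Z = "bmul (bmul ((\<lambda>j. 0), (\<lambda>j. if j = i then k else 0)) q) ((\<lambda>j. if j = i then snd m i else 0), (\<lambda>j. 0))"
  have Zi: "fst ?Z i = 0 \<and> snd ?Z i = 0 \<longleftrightarrow> fst q i = fst m i \<and> snd q i = snd m i"
    using assms by (simp add: bmul_def min_def) arith
  have Zj: "fst ?Z j = fst q j \<and> snd ?Z j = snd q j" if "j \<noteq> i" for j
    using that by (simp add: bmul_def)
  have "?Z = del_coord i m \<longleftrightarrow> (\<forall>j. fst ?Z j = fst (del_coord i m) j \<and> snd ?Z j = snd (del_coord i m) j)"
    by (auto simp: prod_eq_iff fun_eq_iff)
  also have "\<dots> \<longleftrightarrow> (\<forall>j. fst q j = fst m j \<and> snd q j = snd m j)"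
    using Zi Zj by (auto simp: del_coord_def)
  also have "\<dots> \<longleftrightarrow> q = m" by (auto simp: prod_eq_iff fun_eq_iff)
  finally show ?thesis .
qed

lemma prime_strip_variable:
  fixes g :: "mono \<Rightarrow> 'k::field"
  assumes P: "is_prime_ideal n P" and i: "i < n" and gP: "g \<in> P" and gnz: "g \<noteq> szero"
    and gT: "supported_on (insert i T) g"
  obtains g' where "g' \<in> Sn n" "supported_on T g'" "g' \<noteq> szero" "smult (e00 i) g' \<in> P"
proof -
  have IP: "is_ideal n P" using P by (simp add: is_prime_ideal_def)
  have gS: "g \<in> Sn n" using IP gP ideal_subset_Sn by blast
  have fg: "finite (supp g)" using gS by (simp add: Sn_finite_supp)
  have "supp g \<noteq> {}" using gnz by (auto simp: supp_def szero_def fun_eq_iff)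
  then obtain ms where ms: "ms \<in> supp g" and kmin: "\<And>q. q \<in> supp g \<Longrightarrow> fst ms i \<le> fst q i"
    using fg ex_min_if_finite[of "(\<lambda>q. fst q i) ` supp g"] by (metis (no_types, lifting) finite_imageI
        image_iff image_is_empty not_le_imp_less Min_le Min_in)
  define y :: mono where "y = ((\<lambda>j. 0), (\<lambda>j. if j = i then fst ms i else 0))"
  define x :: mono where "x = ((\<lambda>j. if j = i then snd ms i else 0), (\<lambda>j. 0))"
  have vy: "y \<in> valid_monos n" "x \<in> valid_monos n" using i by (auto simp: y_def x_def valid_monos_def)
  define h where "h = smult (smult (monom y) g) (monom x)"
  have hP: "h \<in> P" unfolding h_def
    by (rule ideal_multr[OF IP Sn_monom[OF vy(2)]], rule ideal_multl[OF IP Sn_monom[OF vy(1)] gP])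
  have hS: "h \<in> Sn n" using hP IP ideal_subset_Sn by blast
  have ES: "(e00 i :: mono \<Rightarrow> 'k) \<in> Sn n" by (rule e00_Sn[OF i])
  have "smult (e00 i) (free_part i h) \<in> P"
    unfolding e00_sandwich[OF i hS, symmetric]
    by (rule ideal_multr[OF IP ES], rule ideal_multl[OF IP ES hP])
  moreover have "supported_on T (free_part i h)"
    unfolding h_def
    by (intro supported_on_free_part supported_on_smult)
      (simp_all add: fg finite_supp_smult gT supported_on_monom x_def y_def)
  moreover have "free_part i h (del_coord i ms) = g ms"
  proof -
    have "free_part i h (del_coord i ms) = (\<Sum>q\<in>supp g. if bmul (bmul y q) x = del_coord i ms then g q else 0)"
      unfolding h_def by (simp add: free_part_def del_coord_def monom_sandwich_apply[OF fg, symmetric])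
    also have "\<dots> = (\<Sum>q\<in>supp g. if q = ms then g q else 0)"
      by (intro sum.cong refl) (simp add: x_def y_def bmul_strip_coord_eq_iff kmin)
    also have "\<dots> = g ms" using fg ms by (simp add: sum.delta')
    finally show ?thesis .
  qed
  hence "free_part i h (del_coord i ms) \<noteq> 0" using ms by (simp add: supp_def)
  hence "free_part i h \<noteq> szero" by (auto simp: szero_def)
  ultimately show ?thesis using that free_part_Sn[OF hS] by blast
qed

lemma ideal_supported_on_empty_sone:
  fixes P :: "(mono \<Rightarrow> 'k::field) set"
  assumes P: "is_ideal n P" and g: "g \<in> P" "g \<noteq> szero" "supported_on {} g"
  shows "sone \<in> P"
proof -
  have z: "g m = 0" if "m \<noteq> mono1" for m
  proof (rule ccontr)
    assume "g m \<noteq> 0"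
    hence "fst m j = 0 \<and> snd m j = 0" for j using supported_onD[OF g(3)] by simp
    hence "m = mono1" by (simp add: mono1_def prod_eq_iff fun_eq_iff)
    thus False using that by simp
  qed
  have "g mono1 \<noteq> 0"
  proof
    assume "g mono1 = 0"
    hence "g m = 0" for m using z by (cases "m = mono1") simp_all
    hence "g = szero" by (simp add: szero_def fun_eq_iff)
    thus False using g(2) by simp
  qed
  moreover have "sscale (inverse (g mono1)) g = sone" if "g mono1 \<noteq> 0"
    using z that by (auto simp: fun_eq_iff sscale_def sone_def mono1_def[symmetric])
  ultimately show ?thesis using ideal_sscale[OF P g(1)] by metis
qed

lemma prime_contains_e00:
  fixes P :: "(mono \<Rightarrow> 'k::field) set"
  assumes P: "is_prime_ideal n P" and nz: "P \<noteq> {szero}"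
  shows "\<exists>i<n. e00 i \<in> P"
proof -
  have IP: "is_ideal n P" and PS: "P \<noteq> Sn n" using P by (simp_all add: is_prime_ideal_def)
  have "g \<in> Sn n \<Longrightarrow> g \<in> P \<Longrightarrow> g \<noteq> szero \<Longrightarrow> supported_on T g \<Longrightarrow> \<exists>i<n. e00 i \<in> P"
    if "finite T" "T \<subseteq> {..<n}" for T g
    using that
  proof (induction T arbitrary: g rule: finite_induct)
    case empty
    thus ?case using ideal_supported_on_empty_sone[OF IP] ideal_sone_eq_Sn[OF IP] PS by blast
  next
    case (insert i T)
    have i: "i < n" using insert by auto
    obtain g' where g': "g' \<in> Sn n" "supported_on T g'" "g' \<noteq> szero" "smult (e00 i) g' \<in> P"
      using prime_strip_variable[OF P i insert.prems(2-4)] by blast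
    have "e00 i \<in> P \<or> g' \<in> P" by (rule prime_e00_or_free[OF P i g'(1,2) insert(2) g'(4)])
    thus ?case using i insert.IH[OF g'(1) _ g'(3,2)] insert.prems by auto
  qed
  moreover obtain g where g: "g \<in> P" "g \<noteq> szero" using nz ideal_zero[OF IP] by blast
  moreover have "g \<in> Sn n" using g IP ideal_subset_Sn by blast
  moreover hence "supported_on {..<n} g" by (auto simp: supported_on_def Sn_def valid_monos_def)
  ultimately show ?thesis by blast
qed

lemma aideal_subset_invariant_prime:
  fixes P :: "(mono \<Rightarrow> 'k::field) set"
  assumes P: "is_prime_ideal n P" and nz: "P \<noteq> {szero}"
    and inv: "\<forall>\<sigma>\<in>(Gn n :: ((mono \<Rightarrow> 'k) \<Rightarrow> _) set). \<sigma> ` P = P"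
  shows "aideal n \<subseteq> P"
proof -
  have IP: "is_ideal n P" using P by (simp add: is_prime_ideal_def)
  obtain i where i: "i < n" "e00 i \<in> P" using prime_contains_e00[OF P nz] by blast
  have "e00 j \<in> P" if j: "j < n" for j
  proof -
    let ?s = "\<lambda>f::mono \<Rightarrow> 'k. \<lambda>m. f (swap_mono i j m)"
    have "?s ` P = P" using inv swap_aut_Gn[OF i(1) j] by blast
    moreover have "?s (e00 i) = e00 j" by (rule swap_e00)
    ultimately show ?thesis using i(2) by (metis image_eqI)
  qed
  thus ?thesis by (intro aideal_least[OF IP]) auto
qed

section \<open>Invariant prime ideals containing \<open>a\<^sub>n\<close>\<close>

lemma two_pow_eq_one: "(2::'k::field_char_0) ^ k = 1 \<Longrightarrow> k = 0"
proof -
  assume "(2::'k) ^ k = 1"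
  hence "(of_nat (2 ^ k) :: 'k) = of_nat 1" by simp
  hence "(2::nat) ^ k = 1" by (simp only: of_nat_eq_iff)
  thus "k = 0" by simp
qed

lemma power_int_two_inj: assumes "(2::'k::field_char_0) powi a = 2 powi b" shows "a = b"
proof (rule ccontr)
  assume ne: "a \<noteq> b"
  { fix a b :: int assume lt: "a < b" and e: "(2::'k) powi a = 2 powi b"
    have "(2::'k) powi b = 2 powi a * 2 powi (b - a)" by (simp add: power_int_add[symmetric])
    also have "(2::'k) powi (b - a) = 2 ^ nat (b - a)" using lt by (simp add: power_int_def)
    finally have "(2::'k) ^ nat (b - a) = 1" using e by (simp add: power_int_not_zero)
    hence False using two_pow_eq_one lt by fastforce }
  thus False using ne assms by (metis linorder_neqE)
qed

lemma lookup_laurent_torus: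
  assumes fg: "finite (supp g)" and i: "i < n"
  shows "Poly_Mapping.lookup (laurent n (sadd (\<lambda>m. torus_weight i l m * g m) (sneg (sscale c g)))) e
    = (l powi Poly_Mapping.lookup e i - c) * Poly_Mapping.lookup (laurent n g) e"
proof -
  let ?h = "sadd (\<lambda>m. torus_weight i l m * g m) (sneg (sscale c g))"
  have "supp ?h \<subseteq> supp g" by (auto simp: supp_def sadd_def sneg_def sscale_def)
  hence "Poly_Mapping.lookup (laurent n ?h) e = (\<Sum>m\<in>supp g. if zdeg n m = e then ?h m else 0)"
    by (rule lookup_laurent_eq_sum[OF fg])
  also have "\<dots> = (\<Sum>m\<in>supp g. (l powi Poly_Mapping.lookup e i - c) * (if zdeg n m = e then g m else 0))"
    using i by (intro sum.cong refl)
      (auto simp: torus_weight_def lookup_zdeg sadd_def sneg_def sscale_def algebra_simps)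
  also have "\<dots> = (l powi Poly_Mapping.lookup e i - c) * Poly_Mapping.lookup (laurent n g) e"
    by (simp add: sum_distrib_left[symmetric] lookup_laurent fg)
  finally show ?thesis .
qed

lemma invariant_ideal_fewer_laurent_terms:
  fixes P :: "(mono \<Rightarrow> 'k::field_char_0) set"
  assumes P: "is_ideal n P" and inv: "\<forall>\<sigma>\<in>(Gn n :: ((mono \<Rightarrow> 'k) \<Rightarrow> _) set). \<sigma> ` P = P"
    and g: "g \<in> P" and d: "d \<in> Poly_Mapping.keys (laurent n g)" "d' \<in> Poly_Mapping.keys (laurent n g)"
    and "d \<noteq> d'"
  obtains h where "h \<in> P" "laurent n h \<noteq> 0"
    "card (Poly_Mapping.keys (laurent n h)) < card (Poly_Mapping.keys (laurent n g))"
proof -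
  have "g \<in> Sn n" using g P ideal_subset_Sn by blast
  hence fg: "finite (supp g)" by (rule Sn_finite_supp)
  obtain i where di: "Poly_Mapping.lookup d i \<noteq> Poly_Mapping.lookup d' i"
    using \<open>d \<noteq> d'\<close> poly_mapping_eqI by meson
  obtain m1 where "zdeg n m1 = d" using keys_laurent[OF fg d(1)] by blast
  moreover obtain m2 where "zdeg n m2 = d'" using keys_laurent[OF fg d(2)] by blast
  ultimately have i: "i < n" using di by (auto simp: lookup_zdeg split: if_splits)
  define c :: 'k where "c = 2 powi (Poly_Mapping.lookup d i)"
  define h where "h = sadd (\<lambda>m. torus_weight i 2 m * g m) (sneg (sscale c g))"
  have "(\<lambda>f m. torus_weight i 2 m * f m) \<in> (Gn n :: ((mono \<Rightarrow> 'k) \<Rightarrow> _) set)"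
    by (rule torus_aut_Gn) simp
  hence "(\<lambda>m. torus_weight i 2 m * g m) \<in> P" using inv g by blast
  hence hP: "h \<in> P" unfolding h_def using g P by (intro ideal_add ideal_neg ideal_sscale)
  have lh: "Poly_Mapping.lookup (laurent n h) e
      = (2 powi Poly_Mapping.lookup e i - c) * Poly_Mapping.lookup (laurent n g) e" for e
    unfolding h_def by (rule lookup_laurent_torus[OF fg i])
  have sub: "Poly_Mapping.keys (laurent n h) \<subseteq> Poly_Mapping.keys (laurent n g) - {d}"
    using lh by (auto simp: in_keys_iff c_def)
  have "(2::'k) powi (Poly_Mapping.lookup d' i) \<noteq> c"
    using power_int_two_inj[where 'k='k] di by (auto simp: c_def)
  hence "laurent n h \<noteq> 0" using lh[of d'] d(2) by (auto simp: in_keys_iff)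
  moreover have "card (Poly_Mapping.keys (laurent n h)) < card (Poly_Mapping.keys (laurent n g))"
    using card_mono[OF _ sub] card_Diff1_less[OF finite_keys d(1)] by simp
  ultimately show ?thesis using hP that by blast
qed

text \<open>\<open>y\<^sup>\<alpha> (x\<^sup>\<alpha> y\<^sup>\<beta>) x\<^sup>\<beta> = 1\<close>.\<close>
lemma ideal_monom_sone:
  fixes P :: "(mono \<Rightarrow> 'k::field) set"
  assumes P: "is_ideal n P" and m: "m \<in> valid_monos n" and mP: "monom m \<in> P"
  shows "sone \<in> P"
proof -
  define yl :: mono where "yl = ((\<lambda>j. 0), fst m)"
  define xr :: mono where "xr = (snd m, (\<lambda>j. 0))"
  have vl: "yl \<in> valid_monos n" "xr \<in> valid_monos n" using m by (auto simp: yl_def xr_def valid_monos_def)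
  have "bmul (bmul yl m) xr = mono1" by (simp add: bmul_def yl_def xr_def mono1_def)
  hence "smult (smult (monom yl) (monom m)) (monom xr) = (sone :: mono \<Rightarrow> 'k)"
    by (simp add: smult_monom_monom sone_eq_monom)
  moreover have "smult (smult (monom yl) (monom m)) (monom xr) \<in> P"
    by (rule ideal_multr[OF P Sn_monom[OF vl(2)]], rule ideal_multl[OF P Sn_monom[OF vl(1)] mP])
  ultimately show ?thesis by simp
qed

lemma ideal_laurent_single_sone:
  fixes P :: "(mono \<Rightarrow> 'k::field) set"
  assumes P: "is_ideal n P" and A: "aideal n \<subseteq> P" and g: "g \<in> P"
    and pg: "laurent n g = Poly_Mapping.single d c" and c: "c \<noteq> 0"
  shows "sone \<in> P"
proof -
  have gS: "g \<in> Sn n" using g P ideal_subset_Sn by blast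
  have "d \<in> Poly_Mapping.keys (laurent n g)" using c by (simp add: pg)
  then obtain m where m: "m \<in> supp g" "zdeg n m = d"
    using keys_laurent[OF Sn_finite_supp[OF gS]] by blast
  have vm: "m \<in> valid_monos n" using m gS by (auto simp: Sn_iff)
  define g2 where "g2 = sadd g (sneg (sscale c (monom m)))"
  have g2S: "g2 \<in> Sn n" by (simp add: g2_def Sn_sadd Sn_sneg Sn_sscale gS Sn_monom vm)
  have "laurent n (sscale c (monom m)) = Poly_Mapping.single d c"
    using m(2) by (simp add: laurent_def supp_def sscale_def monom_def c)
  hence "laurent n g2 = 0"
    by (simp add: g2_def laurent_sadd laurent_sneg pg Sn_finite_supp[OF gS] finite_subset[OF supp_sscale])
  hence "g2 \<in> P" using laurent_zero_aideal[OF g2S] A by blast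
  hence "sadd g (sneg g2) \<in> P" by (intro ideal_add[OF P g] ideal_neg[OF P])
  moreover have "sadd g (sneg g2) = sscale c (monom m)" by (simp add: g2_def sadd_def sneg_def sscale_def fun_eq_iff)
  ultimately have "sscale (inverse c) (sscale c (monom m)) \<in> P" by (simp add: ideal_sscale[OF P])
  moreover have "sscale (inverse c) (sscale c (monom m)) = monom m" using c by (simp add: sscale_def fun_eq_iff)
  ultimately show ?thesis using ideal_monom_sone[OF P vm] by simp
qed

lemma invariant_prime_subset_aideal:
  fixes P :: "(mono \<Rightarrow> 'k::field_char_0) set"
  assumes P: "is_prime_ideal n P" and A: "aideal n \<subseteq> P"
    and inv: "\<forall>\<sigma>\<in>(Gn n :: ((mono \<Rightarrow> 'k) \<Rightarrow> _) set). \<sigma> ` P = P"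
  shows "P \<subseteq> aideal n"
proof (rule ccontr)
  assume "\<not> P \<subseteq> aideal n"
  have IP: "is_ideal n P" and PS: "P \<noteq> Sn n" using P by (simp_all add: is_prime_ideal_def)
  have "\<exists>g. g \<in> P \<and> laurent n g \<noteq> 0"
    using \<open>\<not> P \<subseteq> aideal n\<close> laurent_zero_aideal IP ideal_subset_Sn by blast
  then obtain g where g: "g \<in> P" "laurent n g \<noteq> 0"
    and gmin: "\<And>h. h \<in> P \<and> laurent n h \<noteq> 0 \<Longrightarrow>
      card (Poly_Mapping.keys (laurent n g)) \<le> card (Poly_Mapping.keys (laurent n h))"
    using ex_has_least_nat[of "\<lambda>g. g \<in> P \<and> laurent n g \<noteq> 0" _ "\<lambda>g. card (Poly_Mapping.keys (laurent n g))"]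
    by blast
  obtain d where d: "d \<in> Poly_Mapping.keys (laurent n g)" using g(2) by fastforce
  have "Poly_Mapping.keys (laurent n g) = {d}"
  proof (rule ccontr)
    assume "Poly_Mapping.keys (laurent n g) \<noteq> {d}"
    then obtain d' where "d' \<in> Poly_Mapping.keys (laurent n g)" "d \<noteq> d'" using d by blast
    then obtain h where "h \<in> P" "laurent n h \<noteq> 0"
      "card (Poly_Mapping.keys (laurent n h)) < card (Poly_Mapping.keys (laurent n g))"
      using invariant_ideal_fewer_laurent_terms[OF IP inv g(1) d] by blast
    thus False using gmin[of h] by simp
  qed
  hence "laurent n g = Poly_Mapping.single d (Poly_Mapping.lookup (laurent n g) d)"
    by (intro poly_mapping_eqI) (auto simp: lookup_single when_def in_keys_iff)
  hence "sone \<in> P" using ideal_laurent_single_sone[OF IP A g(1)] d by (simp add: in_keys_iff)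
  thus False using ideal_sone_eq_Sn[OF IP] PS by blast
qed

lemma e00_neq_szero: "(e00 i :: mono \<Rightarrow> 'k::field) \<noteq> szero"
proof
  assume "(e00 i :: mono \<Rightarrow> 'k) = szero"
  hence "(e00 i :: mono \<Rightarrow> 'k) mono1 = 0" by (simp add: szero_def)
  moreover have "(delta i, delta i) \<noteq> mono1" by (auto simp: delta_def mono1_def fun_eq_iff)
  ultimately show False by (simp add: e00_eq)
qed

lemma aideal_neq_szero: "0 < n \<Longrightarrow> aideal n \<noteq> {szero :: mono \<Rightarrow> 'k::field}"
  using e00_aideal[of 0 n] e00_neq_szero[where 'k = 'k] by auto

theorem theorem9p8:
  fixes n :: nat and P :: "(mono \<Rightarrow> 'k::field_char_0) set"
  assumes "n \<ge> 1"
  shows "(is_prime_ideal n P \<and> P \<noteq> {szero} \<and> (\<forall>\<sigma>\<in>(Gn n :: ((mono \<Rightarrow> 'k) \<Rightarrow> _) set). \<sigma> ` P = P))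
         \<longleftrightarrow> P = aideal n"
proof
  assume H: "is_prime_ideal n P \<and> P \<noteq> {szero} \<and> (\<forall>\<sigma>\<in>(Gn n :: ((mono \<Rightarrow> 'k) \<Rightarrow> _) set). \<sigma> ` P = P)"
  hence "aideal n \<subseteq> P" using aideal_subset_invariant_prime by blast
  with H show "P = aideal n" using invariant_prime_subset_aideal by blast
next
  assume "P = aideal n"
  thus "is_prime_ideal n P \<and> P \<noteq> {szero} \<and> (\<forall>\<sigma>\<in>(Gn n :: ((mono \<Rightarrow> 'k) \<Rightarrow> _) set). \<sigma> ` P = P)"
    using assms by (simp add: prime_aideal aideal_neq_szero Gn_image_aideal)
qed

end
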